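(* Define $g_2(n)$ by $$\sum_{n=0}^{\infty}g_2(n)q^n=\frac{(-q;q)_\infty}{(q;q)_\infty}\,\phi(q^2)=\frac{\ell_4^5}{\ell_1^2\ell_2\ell_8^2}.$$ Then for all integers $\alpha\ge0$: (i) for every prime $p\ge3$ and every $1\le j\le p-1$, $$\sum_{n=0}^{\infty} g_2\!\left(16p^{2\alpha}n+2p^{2\alpha}\right)q^n\equiv 2\psi(q)\pmod 4,\qquad g_2\!\left(16p^{2\alpha+2}n+16p^{2\alpha+1}j+2p^{2\alpha+2}\right)\equiv0\pmod 4\ \text{ for all } n\ge0;$$ (ii) for every prime $p\ge5$ with $\left(\frac{-8}{p}\right)=-1$ and every $1\le j\le p-1$, $$\sum_{n=0}^{\infty} g_2\!\left(8p^{2\alpha}n+3p^{2\alpha}\right)q^n\equiv 4\ell_1\ell_8\pmod 8,\qquad g_2\!\left(8p^{2\alpha+2}n+8p^{2\alpha+1}j+3p^{2\alpha+2}\right)\equiv0\pmod 8\ \text{ for all } n\ge0.$$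
   Context: $(A;q)_\infty=\prod_{j\ge0}(1-Aq^j)$ and $\ell_n=(q^n;q^n)_\infty$ for integers $n\ge1$. $\phi(q)=\sum_{m\in\mathbb Z}q^{m^2}$ and $\psi(q)=\sum_{m\ge0}q^{m(m+1)/2}=\ell_2^2/\ell_1$. A congruence $A(q)\equiv B(q)\pmod M$ between power series with integer coefficients means that corresponding coefficients are congruent modulo $M$. $\left(\frac{\cdot}{p}\right)$ is the Legendre symbol. *)

theory Defs
  imports "HOL-Computational_Algebra.Formal_Power_Series" "HOL-Number_Theory.Number_Theory"
begin

text \<open>ell k = (q^k;q^k)_infinity as a formal power series over int.  The n-th
coefficient of the infinite product equals the n-th coefficient of the finite
product over j = 1..n (for k >= 1 the remaining factors are 1 + O(q^(n+1))).\<close>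
definition ell :: "nat \<Rightarrow> int fps" where
  "ell k = Abs_fps (\<lambda>n. fps_nth (\<Prod>j\<in>{1..n}. 1 - fps_X ^ (k * j)) n)"

text \<open>The series sum_n g2(n) q^n = ell_4^5 / (ell_1^2 ell_2 ell_8^2); the denominator has
constant term 1, so its inverse is computed by fps_right_inverse with constant 1.\<close>
definition G2 :: "int fps" where
  "G2 = ell 4 ^ 5 * fps_right_inverse (ell 1 ^ 2 * ell 2 * ell 8 ^ 2) 1"

definition g2 :: "nat \<Rightarrow> int" where
  "g2 n = fps_nth G2 n"

definition psi :: "int fps" where
  "psi = Abs_fps (\<lambda>n. if \<exists>m::nat. n = m * (m + 1) div 2 then 1 else 0)"

end

theory Submission
  imports Defs
begin

unbundle fps_syntax

text \<open>
  Let \<open>T = \<Sum>\<^sub>b\<^sub>\<ge>\<^sub>1 (-1)^b q^(b^2)\<close> and \<open>S = \<Sum>\<^sub>b\<^sub>\<ge>\<^sub>1 q^(2b^2)\<close>. By the Jacobi triple product,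
  \<open>1 + 2T = \<phi>(-q) = \<ell>\<^sub>1^2/\<ell>\<^sub>2\<close> and \<open>1 + 2S = \<phi>(q^2) = \<ell>\<^sub>4^5/(\<ell>\<^sub>2^2 \<ell>\<^sub>8^2)\<close>, so the generating
  function \<open>G\<close> of \<open>g\<^sub>2\<close> satisfies \<open>G (1 + 2T) = 1 + 2S\<close>. Iterating this relation gives
  \<open>G \<equiv> 1 + 2S - 2T\<close> modulo 4 and \<open>G \<equiv> 1 + 2S - 2T - 4ST + 4T^2\<close> modulo 8.

  At \<open>n = 2M\<close> with \<open>M\<close> odd only \<open>2S\<close> survives, and its coefficient is 2 exactly when \<open>M\<close> is a square.
  At \<open>n \<equiv> 3 (mod 4)\<close> only \<open>-4ST\<close> survives, and modulo 8 it is 4 times the number of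
  representations \<open>n = 2a^2 + b^2\<close> with \<open>a, b \<ge> 1\<close>; for \<open>n = 8m + 3\<close> this number is also the
  coefficient of \<open>q^m\<close> in \<open>\<psi>(q) \<psi>(q^2) \<equiv> \<ell>\<^sub>1 \<ell>\<^sub>8\<close> modulo 2. Multiplying \<open>n\<close> by \<open>p^2\<close> changes
  neither squareness nor, when \<open>p\<close> is inert in \<open>\<int>[\<surd>-2]\<close>, the number of representations, whereas an
  extra odd power of \<open>p\<close> rules out both.

  The triple product is obtained as a limit of its finite form, which follows from Rothe's
  q-binomial theorem.
\<close>

section \<open>Gaussian binomial coefficients\<close>

fun qbinom :: "'a::comm_ring_1 \<Rightarrow> nat \<Rightarrow> nat \<Rightarrow> 'a" where
  "qbinom Q 0 k = (if k = 0 then 1 else 0)"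
| "qbinom Q (Suc m) 0 = 1"
| "qbinom Q (Suc m) (Suc k) = qbinom Q m k + Q ^ Suc k * qbinom Q m (Suc k)"

lemma qbinom_eq_0: "m < k \<Longrightarrow> qbinom Q m k = 0"
  by (induction Q m k rule: qbinom.induct) auto

lemma qbinom_0_right [simp]: "qbinom Q m 0 = 1"
  by (cases m) auto

lemma triangle_Suc: "Suc k * (Suc k - 1) div 2 = k * (k - 1) div 2 + k"
proof -
  have "Suc k * (Suc k - 1) = k * (k - 1) + 2 * k"
    by (cases k) (auto simp: algebra_simps)
  then show ?thesis by simp
qed

lemma q_binomial_theorem:
  fixes a y Q :: "'a::comm_ring_1"
  shows "(\<Prod>i<m. a + y * Q ^ i) = (\<Sum>k\<le>m. qbinom Q m k * Q ^ (k * (k - 1) div 2) * y ^ k * a ^ (m - k))"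
proof (induction m arbitrary: y)
  case 0
  then show ?case by simp
next
  case (Suc m)
  define t where "t k = qbinom Q m k * Q ^ (k * (k - 1) div 2 + k) * y ^ k * a ^ (Suc m - k)" for k
  define u where "u k = qbinom Q m k * Q ^ (k * (k - 1) div 2 + k) * y ^ Suc k * a ^ (m - k)" for k
  have "(\<Prod>i<Suc m. a + y * Q ^ i) = (a + y) * (\<Prod>i<m. a + (y * Q) * Q ^ i)"
    by (subst prod.lessThan_Suc_shift) (simp add: ac_simps)
  also have "\<dots> = (a + y) * (\<Sum>k\<le>m. qbinom Q m k * Q ^ (k * (k - 1) div 2) * (y * Q) ^ k * a ^ (m - k))"
    using Suc.IH by simp
  also have "\<dots> = (\<Sum>k\<le>m. t k) + (\<Sum>k\<le>m. u k)"
    unfolding t_def u_def distrib_right sum_distrib_left sum.distrib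
    by (intro arg_cong2[where f = "(+)"] sum.cong refl)
       (auto simp: power_mult_distrib power_add Suc_diff_le algebra_simps)
  also have "(\<Sum>k\<le>m. t k) = a ^ Suc m + (\<Sum>k\<le>m. t (Suc k))"
  proof -
    have "(\<Sum>k\<le>m. t k) = (\<Sum>k\<le>Suc m. t k)"
      by (simp add: t_def qbinom_eq_0)
    also have "\<dots> = t 0 + (\<Sum>k\<le>m. t (Suc k))"
      by (rule sum.atMost_Suc_shift)
    finally show ?thesis by (simp add: t_def)
  qed
  also have "a ^ Suc m + (\<Sum>k\<le>m. t (Suc k)) + (\<Sum>k\<le>m. u k) =
      qbinom Q (Suc m) 0 * Q ^ (0 * (0 - 1) div 2) * y ^ 0 * a ^ (Suc m - 0) +
      (\<Sum>k\<le>m. qbinom Q (Suc m) (Suc k) * Q ^ (Suc k * (Suc k - 1) div 2) * y ^ Suc k * a ^ (Suc m - Suc k))"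
    unfolding t_def u_def triangle_Suc qbinom.simps distrib_right sum.distrib
    by (simp add: algebra_simps power_add)
  also have "\<dots> = (\<Sum>k\<le>Suc m. qbinom Q (Suc m) k * Q ^ (k * (k - 1) div 2) * y ^ k * a ^ (Suc m - k))"
    by (rule sum.atMost_Suc_shift[symmetric])
  finally show ?case .
qed

definition qpoch :: "'a::comm_ring_1 \<Rightarrow> nat \<Rightarrow> 'a" where
  "qpoch Q r = (\<Prod>i\<in>{1..r}. 1 - Q ^ i)"

lemma qpoch_0 [simp]: "qpoch Q 0 = 1"
  by (simp add: qpoch_def)

lemma qpoch_Suc: "qpoch Q (Suc r) = qpoch Q r * (1 - Q ^ Suc r)"
  by (simp add: qpoch_def prod.cl_ivl_Suc)

lemma qbinom_mult_qpoch:
  "k \<le> m \<Longrightarrow> qbinom Q m k * qpoch Q k * qpoch Q (m - k) = qpoch Q m"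
proof (induction m arbitrary: k)
  case 0
  then show ?case by simp
next
  case (Suc m)
  show ?case
  proof (cases k)
    case 0
    then show ?thesis by simp
  next
    case (Suc i)
    have "qbinom Q m i * qpoch Q (Suc i) * qpoch Q (m - i) =
        (qbinom Q m i * qpoch Q i * qpoch Q (m - i)) * (1 - Q ^ Suc i)"
      by (simp add: qpoch_Suc ac_simps)
    then have left: "qbinom Q m i * qpoch Q (Suc i) * qpoch Q (m - i) = qpoch Q m * (1 - Q ^ Suc i)"
      using Suc.IH[of i] Suc.prems \<open>k = Suc i\<close> by simp
    have right: "Q ^ Suc i * qbinom Q m (Suc i) * qpoch Q (Suc i) * qpoch Q (m - i) =
        Q ^ Suc i * qpoch Q m * (1 - Q ^ (m - i))"
    proof (cases "i = m")
      case True
      then show ?thesis by (simp add: qbinom_eq_0)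
    next
      case False
      then have le: "Suc i \<le> m" and "m - i = Suc (m - Suc i)"
        using Suc.prems \<open>k = Suc i\<close> by auto
      then have "Q ^ Suc i * qbinom Q m (Suc i) * qpoch Q (Suc i) * qpoch Q (m - i) =
          Q ^ Suc i * (qbinom Q m (Suc i) * qpoch Q (Suc i) * qpoch Q (m - Suc i)) * (1 - Q ^ (m - i))"
        by (simp only: qpoch_Suc ac_simps)
      then show ?thesis
        using Suc.IH[OF le] by simp
    qed
    have "Suc i + (m - i) = Suc m"
      using Suc.prems \<open>k = Suc i\<close> by simp
    then have pow: "Q ^ Suc i * Q ^ (m - i) = Q ^ Suc m"
      by (metis power_add)
    have merge: "x * (1 - a) + a * x * (1 - b) = x * (1 - a * b)" for x a b :: 'a
      by (simp add: algebra_simps)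
    have "qbinom Q (Suc m) k * qpoch Q k * qpoch Q (Suc m - k) =
        qbinom Q m i * qpoch Q (Suc i) * qpoch Q (m - i) +
        Q ^ Suc i * qbinom Q m (Suc i) * qpoch Q (Suc i) * qpoch Q (m - i)"
      by (simp only: \<open>k = Suc i\<close> qbinom.simps diff_Suc_Suc distrib_right mult.assoc)
    also have "\<dots> = qpoch Q m * (1 - Q ^ Suc i) + Q ^ Suc i * qpoch Q m * (1 - Q ^ (m - i))"
      unfolding left right ..
    also have "\<dots> = qpoch Q (Suc m)"
      unfolding merge pow qpoch_Suc ..
    finally show ?thesis .
  qed
qed

section \<open>Finite Jacobi triple product\<close>

lemma sum_lessThan_id_nat: "(\<Sum>i<n. i) = n * (n - 1) div (2::nat)"
  by (cases n) (simp_all add: lessThan_Suc_atMost atLeast0AtMost[symmetric] gauss_sum_nat mult.commute)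

lemma prod_lessThan_double:
  fixes f :: "nat \<Rightarrow> 'a::comm_monoid_mult"
  shows "(\<Prod>i<2 * n. f i) = (\<Prod>i<n. f i) * (\<Prod>i<n. f (i + n))"
  using prod.atLeastLessThan_concat[of 0 n "2 * n" f] prod.shift_bounds_nat_ivl[of f 0 n n]
  by (simp add: atLeast0LessThan mult_2)

text \<open>Rothe's theorem with \<open>a = v Q^(n-1)\<close> and \<open>2n\<close> factors: the lower half of the product
  is reversed, the upper half shifted.\<close>
lemma jacobi_triple_product_finite:
  fixes Q v z :: "'a::comm_ring_1"
  shows "Q ^ (n * (n - 1) div 2 + n * (n - 1)) * ((\<Prod>j<n. z + v * Q ^ j) * (\<Prod>j<n. v + z * Q ^ Suc j)) =
    (\<Sum>k\<le>2 * n. qbinom Q (2 * n) k * Q ^ (k * (k - 1) div 2 + (n - 1) * (2 * n - k)) * z ^ k * v ^ (2 * n - k))"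
proof -
  define f where "f i = v * Q ^ (n - 1) + z * Q ^ i" for i
  have lower: "(\<Prod>i<n. f i) = Q ^ (n * (n - 1) div 2) * (\<Prod>j<n. z + v * Q ^ j)"
  proof -
    have "f i = Q ^ i * (z + v * Q ^ (n - Suc i))" if "i < n" for i
    proof -
      have "Q ^ (n - 1) = Q ^ i * Q ^ (n - Suc i)"
        using that by (simp flip: power_add)
      then show ?thesis by (simp add: f_def algebra_simps)
    qed
    then have "(\<Prod>i<n. f i) = (\<Prod>i<n. Q ^ i) * (\<Prod>i<n. z + v * Q ^ (n - Suc i))"
      by (simp add: prod.distrib)
    also have "(\<Prod>i<n. Q ^ i) = Q ^ (n * (n - 1) div 2)"
      by (simp add: power_sum[symmetric] sum_lessThan_id_nat)
    also have "(\<Prod>i<n. z + v * Q ^ (n - Suc i)) = (\<Prod>j<n. z + v * Q ^ j)"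
      by (rule prod.nat_diff_reindex)
    finally show ?thesis .
  qed
  have upper: "(\<Prod>i<n. f (i + n)) = Q ^ ((n - 1) * n) * (\<Prod>j<n. v + z * Q ^ Suc j)"
  proof -
    have "f (i + n) = Q ^ (n - 1) * (v + z * Q ^ Suc i)" if "i < n" for i
    proof -
      have "i + n = (n - 1) + Suc i"
        using that by simp
      then have "Q ^ (i + n) = Q ^ (n - 1) * Q ^ Suc i"
        by (metis power_add)
      then show ?thesis by (simp add: f_def algebra_simps)
    qed
    then show ?thesis
      by (simp add: prod.distrib flip: power_mult)
  qed
  have "Q ^ (n * (n - 1) div 2 + n * (n - 1)) * ((\<Prod>j<n. z + v * Q ^ j) * (\<Prod>j<n. v + z * Q ^ Suc j)) =
      (\<Prod>i<2 * n. f i)"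
    unfolding prod_lessThan_double lower upper by (simp only: power_add ac_simps)
  also have "\<dots> = (\<Sum>k\<le>2 * n. qbinom Q (2 * n) k * Q ^ (k * (k - 1) div 2) * z ^ k * (v * Q ^ (n - 1)) ^ (2 * n - k))"
    unfolding f_def by (rule q_binomial_theorem)
  also have "\<dots> = (\<Sum>k\<le>2 * n. qbinom Q (2 * n) k * Q ^ (k * (k - 1) div 2 + (n - 1) * (2 * n - k)) * z ^ k * v ^ (2 * n - k))"
    by (simp add: power_mult_distrib power_add power_mult ac_simps)
  finally show ?thesis .
qed

text \<open>\<open>(k - n)^2\<close> and \<open>(k - n)(k - n + 1)/2\<close>, with \<open>k - n\<close> taken in \<open>\<int>\<close>.\<close>
definition theta_exponent :: "nat \<Rightarrow> nat \<Rightarrow> nat" where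
  "theta_exponent n k = (if n \<le> k then (k - n)^2 else (n - k)^2)"

definition psi_exponent :: "nat \<Rightarrow> nat \<Rightarrow> nat" where
  "psi_exponent n k = (if n \<le> k then (k - n) * (k - n + 1) div 2 else (n - k) * (n - k - 1) div 2)"

lemma two_mult_triangle: "2 * (k * (k - 1) div 2) = k * (k - 1 :: nat)"
  by (cases k) simp_all

lemma of_nat_mult_pred: "int k * int (k - 1) = int k * (int k - 1)"
  by (cases k) simp_all

lemma theta_exponent_eq:
  assumes "k \<le> 2 * n"
  shows "2 * (k * (k - 1) div 2 + (n - 1) * (2 * n - k)) + (2 * n - k) =
    2 * (n * (n - 1) div 2 + n * (n - 1)) + n + theta_exponent n k"
proof (cases "n = 0")
  case True
  then show ?thesis using assms by (simp add: theta_exponent_def)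
next
  case False
  have "int (theta_exponent n k) = (int k - int n)^2"
    by (simp add: theta_exponent_def of_nat_diff power2_commute)
  moreover have "int (n - 1) = int n - 1" "int (2 * n - k) = 2 * int n - int k"
    using False assms by (simp_all add: of_nat_diff)
  ultimately have "int (k * (k - 1) + 2 * ((n - 1) * (2 * n - k)) + (2 * n - k)) =
      int (n * (n - 1) + 2 * (n * (n - 1)) + n + theta_exponent n k)"
    unfolding of_nat_add of_nat_mult of_nat_mult_pred
    by (simp add: algebra_simps power2_eq_square)
  then show ?thesis
    by (simp only: of_nat_eq_iff distrib_left two_mult_triangle)
qed

lemma two_mult_psi_exponent: "int (2 * psi_exponent n k) = (int k - int n) * (int k - int n + 1)"
proof (cases "n \<le> k")
  case True
  then obtain b where "k = n + b"
    using le_Suc_ex by blast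
  moreover have "2 * (b * (b + 1) div 2) = b * (b + 1)"
    by simp
  ultimately show ?thesis
    by (simp add: psi_exponent_def algebra_simps)
next
  case False
  then obtain c where "n = Suc (k + c)"
    using less_imp_Suc_add[of k n] by auto
  moreover have "2 * (Suc c * c div 2) = Suc c * c"
    by simp
  ultimately show ?thesis
    by (simp add: psi_exponent_def algebra_simps)
qed

lemma psi_exponent_eq:
  assumes "k \<le> 2 * n"
  shows "k * (k - 1) div 2 + (n - 1) * (2 * n - k) = n * (n - 1) div 2 + n * (n - 1) + psi_exponent n k"
proof (cases "n = 0")
  case True
  then show ?thesis using assms by (simp add: psi_exponent_def)
next
  case False
  have "int (n - 1) = int n - 1" "int (2 * n - k) = 2 * int n - int k"
    using False assms by (simp_all add: of_nat_diff)
  then have "int (k * (k - 1) + 2 * ((n - 1) * (2 * n - k))) =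
      int (n * (n - 1) + 2 * (n * (n - 1)) + 2 * psi_exponent n k)"
    unfolding of_nat_add of_nat_mult[of 2 "psi_exponent n k"] two_mult_psi_exponent
    unfolding of_nat_mult of_nat_mult_pred
    by (simp add: algebra_simps)
  then have "2 * (k * (k - 1) div 2 + (n - 1) * (2 * n - k)) =
      2 * (n * (n - 1) div 2 + n * (n - 1) + psi_exponent n k)"
    by (simp only: of_nat_eq_iff distrib_left two_mult_triangle)
  then show ?thesis
    by simp
qed

lemma jacobi_theta_finite:
  fixes w c :: "'a::comm_ring_1" and n :: nat
  assumes c: "c * c = 1"
  defines "e \<equiv> 2 * (n * (n - 1) div 2 + n * (n - 1)) + n"
  shows "w ^ e * (\<Prod>j<n. 1 + c * w ^ (2 * j + 1)) ^ 2 =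
    (\<Sum>k\<le>2 * n. c ^ (n + k) * qbinom (w^2) (2 * n) k * w ^ (e + theta_exponent n k))"
proof -
  let ?P = "\<Prod>j<n. 1 + c * w ^ (2 * j + 1)"
  have left: "(\<Prod>j<n. c + w * (w^2) ^ j) = c ^ n * ?P"
  proof -
    have "c + w * (w^2) ^ j = c * (1 + c * w ^ (2 * j + 1))" for j
      using c by (simp add: distrib_left power_mult flip: mult.assoc)
    then show ?thesis by (simp add: prod.distrib)
  qed
  have right: "(\<Prod>j<n. w + c * (w^2) ^ Suc j) = w ^ n * ?P"
  proof -
    have "w + c * (w^2) ^ Suc j = w * (1 + c * w ^ (2 * j + 1))" for j
      by (simp add: algebra_simps flip: power_mult power_Suc)
    then show ?thesis by (simp add: prod.distrib)
  qed
  have "c ^ n * (w ^ e * ?P ^ 2) =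
      (w^2) ^ (n * (n - 1) div 2 + n * (n - 1)) * ((\<Prod>j<n. c + w * (w^2) ^ j) * (\<Prod>j<n. w + c * (w^2) ^ Suc j))"
  proof -
    have "w ^ e = (w^2) ^ (n * (n - 1) div 2 + n * (n - 1)) * w ^ n"
      unfolding e_def by (simp only: power_add power_mult)
    then show ?thesis
      unfolding left right power2_eq_square[of ?P] by (simp only: ac_simps)
  qed
  also have "\<dots> = (\<Sum>k\<le>2 * n. c ^ k * qbinom (w^2) (2 * n) k * w ^ (e + theta_exponent n k))"
    unfolding jacobi_triple_product_finite
  proof (rule sum.cong[OF refl])
    fix k assume "k \<in> {..2 * n}"
    then have k: "k \<le> 2 * n" by simp
    have "(w^2) ^ (k * (k - 1) div 2 + (n - 1) * (2 * n - k)) * w ^ (2 * n - k) =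
        w ^ (2 * (k * (k - 1) div 2 + (n - 1) * (2 * n - k)) + (2 * n - k))"
      by (simp only: power_add power_mult)
    also have "\<dots> = w ^ (e + theta_exponent n k)"
      unfolding e_def theta_exponent_eq[OF k] ..
    finally have exponent: "(w^2) ^ (k * (k - 1) div 2 + (n - 1) * (2 * n - k)) * w ^ (2 * n - k) =
        w ^ (e + theta_exponent n k)" .
    show "qbinom (w^2) (2 * n) k * (w^2) ^ (k * (k - 1) div 2 + (n - 1) * (2 * n - k)) * c ^ k * w ^ (2 * n - k) =
        c ^ k * qbinom (w^2) (2 * n) k * w ^ (e + theta_exponent n k)"
      unfolding exponent[symmetric] by (simp only: ac_simps)
  qed
  finally have expansion: "c ^ n * (w ^ e * ?P ^ 2) =
      (\<Sum>k\<le>2 * n. c ^ k * qbinom (w^2) (2 * n) k * w ^ (e + theta_exponent n k))" .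
  have "c ^ n * c ^ n = 1"
    using c by (simp flip: power_mult_distrib)
  then have "w ^ e * ?P ^ 2 = c ^ n * (c ^ n * (w ^ e * ?P ^ 2))"
    by (simp flip: mult.assoc)
  also have "\<dots> = (\<Sum>k\<le>2 * n. c ^ (n + k) * qbinom (w^2) (2 * n) k * w ^ (e + theta_exponent n k))"
    unfolding expansion sum_distrib_left by (simp add: power_add mult.assoc)
  finally show ?thesis .
qed

lemma jacobi_psi_finite:
  fixes u :: "'a::comm_ring_1" and n :: nat
  defines "e \<equiv> n * (n - 1) div 2 + n * (n - 1)"
  shows "u ^ e * ((\<Prod>j<n. 1 + u ^ j) * (\<Prod>j<n. 1 + u ^ Suc j)) =
    (\<Sum>k\<le>2 * n. qbinom u (2 * n) k * u ^ (e + psi_exponent n k))"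
proof -
  have "u ^ e * ((\<Prod>j<n. 1 + u ^ j) * (\<Prod>j<n. 1 + u ^ Suc j)) =
      (\<Sum>k\<le>2 * n. qbinom u (2 * n) k * u ^ (k * (k - 1) div 2 + (n - 1) * (2 * n - k)))"
    using jacobi_triple_product_finite[of u n 1 1] unfolding e_def by simp
  also have "\<dots> = (\<Sum>k\<le>2 * n. qbinom u (2 * n) k * u ^ (e + psi_exponent n k))"
    unfolding e_def using psi_exponent_eq by (intro sum.cong refl) simp
  finally show ?thesis .
qed

section \<open>Truncated power series\<close>

definition fps_agree :: "nat \<Rightarrow> 'a::comm_ring_1 fps \<Rightarrow> 'a fps \<Rightarrow> bool" where
  "fps_agree L f g \<longleftrightarrow> (\<forall>i<L. f $ i = g $ i)"

lemma fps_agree_refl [simp]: "fps_agree L f f"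
  by (simp add: fps_agree_def)

lemma fps_agree_sym: "fps_agree L f g \<Longrightarrow> fps_agree L g f"
  by (simp add: fps_agree_def)

lemma fps_agree_trans [trans]: "fps_agree L f g \<Longrightarrow> fps_agree L g h \<Longrightarrow> fps_agree L f h"
  by (simp add: fps_agree_def)

lemma fps_agree_mult: "fps_agree L f f' \<Longrightarrow> fps_agree L g g' \<Longrightarrow> fps_agree L (f * g) (f' * g')"
  unfolding fps_agree_def fps_mult_nth by (auto intro!: sum.cong)

lemma fps_agree_power: "fps_agree L f g \<Longrightarrow> fps_agree L (f ^ n) (g ^ n)"
  by (induction n) (auto intro: fps_agree_mult)

lemma fps_agree_cancel:
  assumes "fps_agree L (f * h) (g * h)" and "h $ 0 = 1"
  shows "fps_agree L f g"
proof -
  have "h * fps_right_inverse h 1 = 1"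
    using assms(2) by (intro fps_right_inverse) simp
  moreover have "fps_agree L (f * h * fps_right_inverse h 1) (g * h * fps_right_inverse h 1)"
    using assms(1) by (rule fps_agree_mult) simp
  ultimately show ?thesis
    by (simp add: mult.assoc)
qed

lemma fps_eq_if_agree: "(\<And>N. fps_agree (Suc N) f g) \<Longrightarrow> f = g"
  by (rule fps_ext) (auto simp: fps_agree_def)

lemma fps_agree_one_minus_X_power: "L \<le> r \<Longrightarrow> fps_agree L (1 - fps_X ^ r) 1"
  by (simp add: fps_agree_def)

lemma fps_agree_one_plus_X_power: "L \<le> r \<Longrightarrow> fps_agree L (1 + fps_X ^ r) 1"
  by (simp add: fps_agree_def)

lemma qpoch_fps_X_power_nth_0: "e \<ge> 1 \<Longrightarrow> qpoch (fps_X ^ e :: 'a::comm_ring_1 fps) r $ 0 = 1"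
  by (induction r) (auto simp: qpoch_Suc simp flip: power_mult)

lemma qpoch_fps_X_power_agree:
  assumes "e \<ge> 1" and "N \<le> r"
  shows "fps_agree (Suc N) (qpoch (fps_X ^ e :: 'a::comm_ring_1 fps) r) (qpoch (fps_X ^ e) N)"
  using assms(2)
proof (induction r rule: dec_induct)
  case (step r)
  have "Suc N \<le> e * Suc r"
    using assms step.hyps by (metis Suc_le_mono le_trans mult_1 mult_le_mono1)
  then have "fps_agree (Suc N) (1 - (fps_X ^ e :: 'a fps) ^ Suc r) 1"
    by (simp only: fps_agree_one_minus_X_power flip: power_mult)
  from fps_agree_mult[OF step.IH this] show ?case
    by (simp add: qpoch_Suc)
qed simp

text \<open>\<open>qbinom Q m k = (Q;Q)\<^sub>m / ((Q;Q)\<^sub>k (Q;Q)\<^sub>m\<^sub>-\<^sub>k)\<close>, and for \<open>Q = q^e\<close> all three products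
  agree with \<open>(Q;Q)\<^sub>N\<close> below degree \<open>N + 1\<close>.\<close>
lemma qbinom_mult_qpoch_agree:
  assumes "e \<ge> 1" "k \<le> m" "N \<le> k" "N \<le> m - k" "N \<le> M"
  shows "fps_agree (Suc N) (qbinom (fps_X ^ e :: 'a::comm_ring_1 fps) m k * qpoch (fps_X ^ e) M) 1"
proof -
  let ?Q = "fps_X ^ e :: 'a fps"
  let ?P = "qpoch ?Q N"
  have "fps_agree (Suc N) (qpoch ?Q m) (qbinom ?Q m k * ?P * ?P)"
    unfolding qbinom_mult_qpoch[OF \<open>k \<le> m\<close>, symmetric]
    using assms by (intro fps_agree_mult qpoch_fps_X_power_agree) auto
  moreover have "fps_agree (Suc N) (qpoch ?Q m) (1 * ?P)"
    using assms by (simp add: qpoch_fps_X_power_agree)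
  ultimately have "fps_agree (Suc N) (qbinom ?Q m k * ?P * ?P) (1 * ?P)"
    by (meson fps_agree_sym fps_agree_trans)
  then have "fps_agree (Suc N) (qbinom ?Q m k * ?P) 1"
    using assms(1) by (rule fps_agree_cancel[OF _ qpoch_fps_X_power_nth_0])
  moreover have "fps_agree (Suc N) (qbinom ?Q m k * qpoch ?Q M) (qbinom ?Q m k * ?P)"
    using assms by (intro fps_agree_mult qpoch_fps_X_power_agree) auto
  ultimately show ?thesis
    by (rule fps_agree_trans[rotated])
qed

lemma ell_nth: "ell k $ i = qpoch (fps_X ^ k) i $ i"
  unfolding ell_def qpoch_def by (simp add: power_mult)

lemma ell_agree_qpoch:
  assumes "k \<ge> 1" and "N \<le> M"
  shows "fps_agree (Suc N) (ell k) (qpoch (fps_X ^ k) M)"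
  unfolding fps_agree_def
proof (intro allI impI)
  fix i assume "i < Suc N"
  then have "fps_agree (Suc i) (qpoch (fps_X ^ k :: int fps) M) (qpoch (fps_X ^ k) i)"
    using assms by (intro qpoch_fps_X_power_agree) auto
  then show "ell k $ i = qpoch (fps_X ^ k) M $ i"
    unfolding ell_nth fps_agree_def by simp
qed

lemma ell_nth_0 [simp]: "ell k $ 0 = 1"
  by (simp add: ell_nth qpoch_def)

text \<open>The limit step of the Jacobi triple product: after multiplication by \<open>(q^e;q^e)\<^sub>M\<close>, the
  Gaussian binomial coefficients in the terms of degree at most \<open>N\<close> may be replaced by 1.\<close>
lemma qpoch_mult_qbinom_sum_nth:
  fixes s :: "nat \<Rightarrow> 'a::comm_ring_1" and D :: "nat \<Rightarrow> nat"
  assumes "e \<ge> 1" and "N \<le> M"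
    and "\<And>k. k \<le> m \<Longrightarrow> D k \<le> N \<Longrightarrow> N \<le> k \<and> N \<le> m - k"
  shows "(qpoch (fps_X ^ e) M * (\<Sum>k\<le>m. fps_const (s k) * qbinom (fps_X ^ e) m k * fps_X ^ D k)) $ N =
    (\<Sum>k\<le>m. if D k = N then s k else 0)"
proof -
  have "(qpoch (fps_X ^ e) M * (\<Sum>k\<le>m. fps_const (s k) * qbinom (fps_X ^ e) m k * fps_X ^ D k)) $ N =
      (\<Sum>k\<le>m. s k * (fps_X ^ D k * (qbinom (fps_X ^ e) m k * qpoch (fps_X ^ e) M)) $ N)"
    by (simp add: sum_distrib_left fps_sum_nth ac_simps)
  also have "\<dots> = (\<Sum>k\<le>m. if D k = N then s k else 0)"
  proof (rule sum.cong[OF refl])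
    fix k assume "k \<in> {..m}"
    show "s k * (fps_X ^ D k * (qbinom (fps_X ^ e) m k * qpoch (fps_X ^ e) M)) $ N = (if D k = N then s k else 0)"
    proof (cases "D k \<le> N")
      case True
      with assms \<open>k \<in> {..m}\<close> have "fps_agree (Suc N) (qbinom (fps_X ^ e :: 'a fps) m k * qpoch (fps_X ^ e) M) 1"
        by (intro qbinom_mult_qpoch_agree) auto
      then show ?thesis
        using True by (auto simp: fps_X_power_mult_nth fps_agree_def)
    qed (auto simp: fps_X_power_mult_nth)
  qed
  finally show ?thesis .
qed

lemma sum_atMost_double_split:
  fixes g :: "nat \<Rightarrow> 'a::comm_monoid_add"
  shows "(\<Sum>k\<le>2 * n. g k) = g n + (\<Sum>b\<in>{1..n}. g (n + b)) + (\<Sum>b\<in>{1..n}. g (n - b))"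
proof -
  have "{..2 * n} = ({..<n} \<union> {n}) \<union> {n + 1..2 * n}"
    by auto
  then have "(\<Sum>k\<le>2 * n. g k) = (\<Sum>k<n. g k) + g n + (\<Sum>k\<in>{n + 1..2 * n}. g k)"
    by (simp only:) (subst sum.union_disjoint; auto simp: add_ac)
  also have "(\<Sum>k\<in>{n + 1..2 * n}. g k) = (\<Sum>b\<in>{1..n}. g (n + b))"
    using sum.shift_bounds_cl_nat_ivl[of g 1 n n] by (simp add: mult_2 add.commute)
  also have "(\<Sum>k<n. g k) = (\<Sum>b\<in>{1..n}. g (n - b))"
    by (rule sum.reindex_bij_witness[where i = "\<lambda>b. n - b" and j = "\<lambda>k. n - k"]) auto
  finally show ?thesis
    by (simp add: ac_simps)
qed

section \<open>Theta functions as products\<close>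

text \<open>\<open>1 + 2 theta_tail d c\<close> is \<open>\<phi>(c q^d) = \<Sum>\<^sub>b\<^sub>\<in>\<^sub>\<int> c^|b| q^(d b^2)\<close>, \<open>psi_dil d\<close> is \<open>\<psi>(q^d)\<close>,
  \<open>odd_qprod c d n\<close> is \<open>(-c q^d; q^(2d))\<^sub>n\<close> and \<open>qpoch_plus d n\<close> is \<open>(-q^d; q^d)\<^sub>n\<close>.\<close>
definition theta_tail :: "nat \<Rightarrow> int \<Rightarrow> int fps" where
  "theta_tail d c = Abs_fps (\<lambda>N. \<Sum>b\<in>{1..N}. if d * b^2 = N then c ^ b else 0)"

definition psi_dil :: "nat \<Rightarrow> int fps" where
  "psi_dil d = Abs_fps (\<lambda>N. if \<exists>m. N = d * (m * (m + 1) div 2) then 1 else 0)"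

definition odd_qprod :: "int \<Rightarrow> nat \<Rightarrow> nat \<Rightarrow> int fps" where
  "odd_qprod c d n = (\<Prod>j<n. 1 + fps_const c * fps_X ^ (d * (2 * j + 1)))"

definition qpoch_plus :: "nat \<Rightarrow> nat \<Rightarrow> int fps" where
  "qpoch_plus d n = (\<Prod>j<n. 1 + fps_X ^ (d * Suc j))"

lemma odd_qprod_minus_one: "odd_qprod (-1) d n = (\<Prod>j<n. 1 - fps_X ^ (d * (2 * j + 1)))"
  unfolding odd_qprod_def by (simp add: fps_const_neg[symmetric] del: fps_const_neg)

lemma odd_qprod_one: "odd_qprod 1 d n = (\<Prod>j<n. 1 + fps_X ^ (d * (2 * j + 1)))"
  by (simp add: odd_qprod_def)

lemma odd_qprod_square_expansion:
  assumes "c * c = 1"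
  shows "odd_qprod c d n ^ 2 =
    (\<Sum>k\<le>2 * n. fps_const (c ^ (n + k)) * qbinom (fps_X ^ (2 * d)) (2 * n) k * fps_X ^ (d * theta_exponent n k))"
proof -
  define e where "e = 2 * (n * (n - 1) div 2 + n * (n - 1)) + n"
  have "fps_const c * fps_const c = 1"
    using assms by (metis fps_const_1_eq_1 fps_const_mult)
  have pw: "(fps_X ^ d :: int fps) ^ m = fps_X ^ (d * m)" for m
    by (simp add: power_mult)
  have "(fps_X ^ d :: int fps) ^ 2 = fps_X ^ (2 * d)"
    by (simp add: pw mult.commute)
  with jacobi_theta_finite[OF \<open>fps_const c * fps_const c = 1\<close>, where w = "fps_X ^ d" and n = n, folded e_def]
  have "fps_X ^ (d * e) * odd_qprod c d n ^ 2 =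
      (\<Sum>k\<le>2 * n. fps_const (c ^ (n + k)) * qbinom (fps_X ^ (2 * d)) (2 * n) k *
        (fps_X ^ (d * e) * fps_X ^ (d * theta_exponent n k)))"
    unfolding odd_qprod_def by (simp only: pw fps_const_power distrib_left[of d e] power_add[of fps_X])
  also have "\<dots> = fps_X ^ (d * e) *
      (\<Sum>k\<le>2 * n. fps_const (c ^ (n + k)) * qbinom (fps_X ^ (2 * d)) (2 * n) k * fps_X ^ (d * theta_exponent n k))"
    by (simp add: sum_distrib_left ac_simps)
  finally show ?thesis
    by simp
qed

lemma le_power2_nat: "x \<le> (x::nat)^2"
  by (cases x) (auto simp: power2_eq_square)

lemma le_triangle: "x \<le> (x::nat) * (x + 1) div 2"
proof -
  have "2 * x \<le> x * (x + 1)"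
    by (cases x) auto
  then show ?thesis by linarith
qed

lemma centered_index_bound:
  assumes "k \<le> 2 * n" and "2 * N + 1 \<le> n" and "(if n \<le> k then k - n else n - k) \<le> Suc N"
  shows "N \<le> k \<and> N \<le> 2 * n - k"
  using assms by (auto split: if_splits)

lemma theta_exponent_bound:
  "k \<le> 2 * n \<Longrightarrow> 2 * N + 1 \<le> n \<Longrightarrow> theta_exponent n k \<le> N \<Longrightarrow> N \<le> k \<and> N \<le> 2 * n - k"
  using le_power2_nat[of "k - n"] le_power2_nat[of "n - k"]
  by (intro centered_index_bound) (auto simp: theta_exponent_def split: if_splits)

lemma psi_exponent_bound:
  assumes "k \<le> 2 * n" and "2 * N + 1 \<le> n" and "psi_exponent n k \<le> N"
  shows "N \<le> k \<and> N \<le> 2 * n - k"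
proof -
  have "(if n \<le> k then k - n else n - k) \<le> Suc (psi_exponent n k)"
  proof (cases "n \<le> k")
    case True
    then show ?thesis
      using le_triangle[of "k - n"] by (simp add: psi_exponent_def)
  next
    case False
    then obtain x where "n - k = Suc x"
      by (metis Suc_diff_Suc not_le)
    then show ?thesis
      using False le_triangle[of x] by (simp add: psi_exponent_def mult.commute)
  qed
  then show ?thesis
    using assms by (intro centered_index_bound) auto
qed

lemma sum_indicator_inj_on:
  assumes "finite A" and "inj_on f A"
  shows "(\<Sum>b\<in>A. if f b = N then 1 else 0) = (if N \<in> f ` A then 1 else (0::int))"
proof -
  have "(\<Sum>b\<in>A. if f b = N then 1 else 0) = (\<Sum>y\<in>f ` A. if y = N then 1 else (0::int))"
    using assms(2) by (simp add: sum.reindex)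
  also have "\<dots> = (if N \<in> f ` A then 1 else 0)"
    using assms(1) by (simp add: sum.delta')
  finally show ?thesis .
qed

lemma theta_tail_nth_eq_sum:
  assumes "d \<ge> 1" and "N \<le> n"
  shows "theta_tail d c $ N = (\<Sum>b\<in>{1..n}. if d * b^2 = N then c ^ b else 0)"
proof -
  have "b \<le> d * b^2" for b
    using assms(1) le_power2_nat[of b] by (metis le_trans mult_le_mono1 mult_1)
  then show ?thesis
    unfolding theta_tail_def fps_nth_Abs_fps
    using assms(2) by (intro sum.mono_neutral_left) (auto simp: not_le intro: le_less_trans)
qed

lemma theta_sum_nth:
  assumes "c * c = 1" and "d \<ge> 1" and "N \<le> n"
  shows "(\<Sum>k\<le>2 * n. if d * theta_exponent n k = N then c ^ (n + k) else 0) = (1 + 2 * theta_tail d c) $ N"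
proof -
  have c_even: "c ^ (2 * m + b) = c ^ b" for m b
    using assms(1) by (simp add: power_add power_mult power2_eq_square)
  let ?g = "\<lambda>k. if d * theta_exponent n k = N then c ^ (n + k) else 0"
  let ?h = "\<lambda>b. if d * b^2 = N then c ^ b else 0"
  have "(\<Sum>b\<in>{1..n}. ?g (n + b)) = (\<Sum>b\<in>{1..n}. ?h b)"
    using c_even[of n] by (intro sum.cong) (auto simp: theta_exponent_def mult_2 add.assoc)
  moreover have "(\<Sum>b\<in>{1..n}. ?g (n - b)) = (\<Sum>b\<in>{1..n}. ?h b)"
  proof (intro sum.cong refl)
    fix b assume "b \<in> {1..n}"
    then have "n + (n - b) = 2 * (n - b) + b" and "theta_exponent n (n - b) = b^2"
      by (auto simp: theta_exponent_def)
    then show "?g (n - b) = ?h b"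
      by (simp only: c_even)
  qed
  moreover have "?g n = (if N = 0 then 1 else 0)"
    using c_even[of n 0] by (auto simp: theta_exponent_def mult_2)
  ultimately show ?thesis
    unfolding sum_atMost_double_split by (simp add: numeral_fps_const theta_tail_nth_eq_sum[OF assms(2,3)])
qed

lemma theta_tail_agree:
  assumes "c * c = 1" and "d \<ge> 1" and "2 * N + 1 \<le> n"
  shows "fps_agree (Suc N) (qpoch (fps_X ^ (2 * d)) n * odd_qprod c d n ^ 2) (1 + 2 * theta_tail d c)"
  unfolding fps_agree_def
proof (intro allI impI)
  fix i assume "i < Suc N"
  then have i: "2 * i + 1 \<le> n" "i \<le> n"
    using assms(3) by auto
  have "(qpoch (fps_X ^ (2 * d)) n * odd_qprod c d n ^ 2) $ i =
      (\<Sum>k\<le>2 * n. if d * theta_exponent n k = i then c ^ (n + k) else 0)"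
    unfolding odd_qprod_square_expansion[OF assms(1)]
  proof (rule qpoch_mult_qbinom_sum_nth)
    fix k assume "k \<le> 2 * n" "d * theta_exponent n k \<le> i"
    moreover have "theta_exponent n k \<le> d * theta_exponent n k"
      using assms(2) by simp
    ultimately show "i \<le> k \<and> i \<le> 2 * n - k"
      using i theta_exponent_bound by (meson le_trans)
  qed (use assms i in auto)
  also have "\<dots> = (1 + 2 * theta_tail d c) $ i"
    using assms i by (intro theta_sum_nth) auto
  finally show "(qpoch (fps_X ^ (2 * d)) n * odd_qprod c d n ^ 2) $ i = (1 + 2 * theta_tail d c) $ i" .
qed

lemma qpoch_plus_expansion:
  assumes "n \<ge> 1"
  shows "2 * qpoch_plus d (n - 1) * qpoch_plus d n =
    (\<Sum>k\<le>2 * n. qbinom (fps_X ^ d) (2 * n) k * fps_X ^ (d * psi_exponent n k))"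
proof -
  define e where "e = n * (n - 1) div 2 + n * (n - 1)"
  have pw: "(fps_X ^ d :: int fps) ^ m = fps_X ^ (d * m)" for m
    by (simp add: power_mult)
  obtain m where m: "n = Suc m"
    using assms by (cases n) auto
  have "(\<Prod>j<n. 1 + (fps_X ^ d :: int fps) ^ j) = (1 + (fps_X ^ d) ^ 0) * (\<Prod>j<m. 1 + (fps_X ^ d) ^ Suc j)"
    unfolding m by (rule prod.lessThan_Suc_shift)
  also have "\<dots> = 2 * qpoch_plus d (n - 1)"
    by (simp add: qpoch_plus_def m power_add flip: power_mult)
  finally have "(\<Prod>j<n. 1 + (fps_X ^ d :: int fps) ^ j) = 2 * qpoch_plus d (n - 1)" .
  with jacobi_psi_finite[where u = "fps_X ^ d :: int fps" and n = n, folded e_def]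
  have "fps_X ^ (d * e) * (2 * qpoch_plus d (n - 1) * qpoch_plus d n) =
      (\<Sum>k\<le>2 * n. qbinom (fps_X ^ d) (2 * n) k * (fps_X ^ (d * e) * fps_X ^ (d * psi_exponent n k)))"
    unfolding qpoch_plus_def by (simp only: pw distrib_left[of d e] power_add[of fps_X] mult.assoc)
  also have "\<dots> = fps_X ^ (d * e) * (\<Sum>k\<le>2 * n. qbinom (fps_X ^ d) (2 * n) k * fps_X ^ (d * psi_exponent n k))"
    by (simp add: sum_distrib_left ac_simps)
  finally show ?thesis
    by simp
qed

lemma strict_mono_triangle:
  assumes "d \<ge> 1"
  shows "strict_mono (\<lambda>b::nat. d * (b * (b + 1) div 2))"
  unfolding strict_mono_Suc_iff
proof
  fix b :: nat
  have "Suc b * (Suc b + 1) div 2 = b * (b + 1) div 2 + Suc b"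
    by (simp add: algebra_simps)
  then show "d * (b * (b + 1) div 2) < d * (Suc b * (Suc b + 1) div 2)"
    using assms by (simp add: algebra_simps)
qed

lemma psi_dil_nth_eq_sum:
  assumes "d \<ge> 1" and "N \<le> n"
  shows "psi_dil d $ N = (\<Sum>b\<in>{0..n}. if d * (b * (b + 1) div 2) = N then 1 else 0)"
proof -
  let ?f = "\<lambda>b::nat. d * (b * (b + 1) div 2)"
  have "N \<in> ?f ` {0..n} \<longleftrightarrow> (\<exists>m. N = ?f m)"
  proof
    assume "\<exists>m. N = ?f m"
    then obtain m where m: "N = ?f m" ..
    have "m \<le> ?f m"
      using assms(1) le_triangle[of m] by (metis le_trans mult_le_mono1 mult_1)
    then show "N \<in> ?f ` {0..n}"
      using m assms(2) by auto
  qed auto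
  then show ?thesis
    unfolding psi_dil_def fps_nth_Abs_fps
    using strict_mono_triangle[OF assms(1)]
    by (simp add: sum_indicator_inj_on strict_mono_imp_inj_on inj_on_subset)
qed

lemma psi_sum_nth:
  assumes "d \<ge> 1" and "N < n"
  shows "(\<Sum>k\<le>2 * n. if d * psi_exponent n k = N then 1 else 0) = 2 * psi_dil d $ N"
proof -
  let ?h = "\<lambda>b. if d * (b * (b + 1) div 2) = N then 1 else (0::int)"
  obtain n' where n': "n = Suc n'"
    using assms(2) by (cases n) auto
  have "(\<Sum>b\<in>{1..n}. if d * psi_exponent n (n + b) = N then 1 else 0) = (\<Sum>b\<in>{1..n}. ?h b)"
    by (intro sum.cong refl) (simp add: psi_exponent_def)
  moreover have "(\<Sum>b\<in>{1..n}. if d * psi_exponent n (n - b) = N then 1 else 0) = (\<Sum>b\<in>{1..n}. ?h (b - 1))"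
  proof (intro sum.cong refl)
    fix b assume "b \<in> {1..n}"
    then have "psi_exponent n (n - b) = (b - 1) * (b - 1 + 1) div 2"
      by (auto simp: psi_exponent_def mult.commute)
    then show "(if d * psi_exponent n (n - b) = N then 1 else 0) = ?h (b - 1)"
      by simp
  qed
  moreover have "(if d * psi_exponent n n = N then 1 else 0) + (\<Sum>b\<in>{1..n}. ?h b) = psi_dil d $ N"
    using assms by (simp add: psi_dil_nth_eq_sum[of d N n] sum.atLeast_Suc_atMost psi_exponent_def)
  moreover have "(\<Sum>b\<in>{1..n}. ?h (b - 1)) = psi_dil d $ N"
    using assms n' sum.shift_bounds_cl_Suc_ivl[of "\<lambda>b. ?h (b - 1)" 0 n']
    by (simp add: psi_dil_nth_eq_sum[of d N n'])
  ultimately show ?thesis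
    unfolding sum_atMost_double_split by simp
qed

lemma psi_dil_agree:
  assumes "d \<ge> 1" and "2 * N + 1 \<le> n"
  shows "fps_agree (Suc N) (qpoch (fps_X ^ d) n * qpoch_plus d n ^ 2) (psi_dil d)"
proof -
  have "n \<ge> 1"
    using assms(2) by simp
  have "fps_agree (Suc N) (qpoch_plus d (n - 1) * (1 + fps_X ^ (d * n))) (qpoch_plus d (n - 1) * 1)"
  proof (intro fps_agree_mult fps_agree_refl fps_agree_one_plus_X_power)
    have "n \<le> d * n"
      using assms(1) by simp
    then show "Suc N \<le> d * n"
      using assms(2) by linarith
  qed
  moreover have "qpoch_plus d n = qpoch_plus d (n - 1) * (1 + fps_X ^ (d * n))"
    using \<open>n \<ge> 1\<close> by (cases n) (simp_all add: qpoch_plus_def)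
  ultimately have shift: "fps_agree (Suc N) (qpoch_plus d n) (qpoch_plus d (n - 1))"
    by simp
  have "fps_agree (Suc N) (qpoch (fps_X ^ d) n * (qpoch_plus d (n - 1) * qpoch_plus d n)) (psi_dil d)"
    unfolding fps_agree_def
  proof (intro allI impI)
    fix i assume "i < Suc N"
    then have i: "2 * i + 1 \<le> n" "i \<le> n" "i < n"
      using assms(2) by auto
    let ?J = "\<Sum>k\<le>2 * n. fps_const 1 * qbinom (fps_X ^ d) (2 * n) k * fps_X ^ (d * psi_exponent n k)"
    have "?J = 2 * (qpoch_plus d (n - 1) * qpoch_plus d n)"
      using qpoch_plus_expansion[OF \<open>n \<ge> 1\<close>] by (simp add: mult.assoc)
    then have "2 * (qpoch (fps_X ^ d) n * (qpoch_plus d (n - 1) * qpoch_plus d n)) $ i =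
        (qpoch (fps_X ^ d) n * ?J) $ i"
      by (simp add: numeral_fps_const mult.left_commute[of "qpoch (fps_X ^ d) n"])
    also have "\<dots> = (\<Sum>k\<le>2 * n. if d * psi_exponent n k = i then 1 else 0)"
    proof (rule qpoch_mult_qbinom_sum_nth)
      fix k assume "k \<le> 2 * n" "d * psi_exponent n k \<le> i"
      moreover have "psi_exponent n k \<le> d * psi_exponent n k"
        using assms(1) by simp
      ultimately show "i \<le> k \<and> i \<le> 2 * n - k"
        using i psi_exponent_bound by (meson le_trans)
    qed (use assms i in auto)
    also have "\<dots> = 2 * psi_dil d $ i"
      using assms i by (intro psi_sum_nth) auto
    finally show "(qpoch (fps_X ^ d) n * (qpoch_plus d (n - 1) * qpoch_plus d n)) $ i = psi_dil d $ i"
      by simp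
  qed
  moreover have "fps_agree (Suc N) (qpoch (fps_X ^ d) n * qpoch_plus d n ^ 2)
      (qpoch (fps_X ^ d) n * (qpoch_plus d (n - 1) * qpoch_plus d n))"
    unfolding power2_eq_square using shift by (intro fps_agree_mult) simp_all
  ultimately show ?thesis
    by (rule fps_agree_trans[rotated])
qed

lemma qpoch_fps_X_power_double:
  "qpoch (fps_X ^ d :: int fps) (2 * M) = qpoch (fps_X ^ (2 * d)) M * odd_qprod (-1) d M"
proof (induction M)
  case 0
  then show ?case by (simp add: odd_qprod_minus_one)
next
  case (Suc M)
  have odd: "(fps_X ^ d :: int fps) ^ Suc (2 * M) = fps_X ^ (d * (2 * M + 1))"
    by (simp only: Suc_eq_plus1 power_mult)
  have even: "(fps_X ^ d :: int fps) ^ Suc (Suc (2 * M)) = (fps_X ^ (2 * d)) ^ Suc M"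
    by (simp only: power_mult[symmetric]) (simp add: algebra_simps)
  have "qpoch (fps_X ^ d :: int fps) (2 * Suc M) =
      qpoch (fps_X ^ d) (2 * M) * (1 - fps_X ^ (d * (2 * M + 1))) * (1 - (fps_X ^ (2 * d)) ^ Suc M)"
    by (simp only: mult_Suc_right add_2_eq_Suc qpoch_Suc odd even)
  then show ?case
    unfolding Suc.IH by (simp add: qpoch_Suc odd_qprod_minus_one ac_simps)
qed

lemma odd_qprod_neg_mult_odd_qprod: "odd_qprod (-1) d n * odd_qprod 1 d n = odd_qprod (-1) (2 * d) n"
proof -
  have "(1 - fps_X ^ (d * (2 * j + 1))) * (1 + fps_X ^ (d * (2 * j + 1))) =
      (1 - fps_X ^ (2 * d * (2 * j + 1)) :: int fps)" for j
  proof -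
    have "2 * d * (2 * j + 1) = d * (2 * j + 1) + d * (2 * j + 1)"
      by simp
    then have "(fps_X ^ (d * (2 * j + 1)) :: int fps) * fps_X ^ (d * (2 * j + 1)) =
        fps_X ^ (2 * d * (2 * j + 1))"
      by (metis power_add)
    then show ?thesis
      by (simp add: algebra_simps)
  qed
  then show ?thesis
    unfolding odd_qprod_minus_one odd_qprod_one prod.distrib[symmetric] by (rule prod.cong[OF refl])
qed

lemma qpoch_mult_qpoch_plus: "qpoch (fps_X ^ d :: int fps) M * qpoch_plus d M = qpoch (fps_X ^ (2 * d)) M"
proof (induction M)
  case 0
  then show ?case by (simp add: qpoch_plus_def)
next
  case (Suc M)
  let ?x = "(fps_X ^ d :: int fps) ^ Suc M"
  have "qpoch_plus d (Suc M) = qpoch_plus d M * (1 + ?x)"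
    unfolding qpoch_plus_def prod.lessThan_Suc power_mult ..
  moreover have "(1 - ?x) * (1 + ?x) = 1 - (fps_X ^ (2 * d)) ^ Suc M"
    by (simp add: algebra_simps power2_eq_square flip: power_mult power_add)
  ultimately show ?case
    using Suc.IH by (simp add: qpoch_Suc ac_simps)
qed

lemma phi_minus_mult_ell:
  assumes "d \<ge> 1"
  shows "(1 + 2 * theta_tail d (-1)) * ell (2 * d) = ell d ^ 2"
proof (rule fps_eq_if_agree)
  fix N :: nat
  define M where "M = 2 * N + 1"
  let ?P = "qpoch (fps_X ^ (2 * d) :: int fps) M" and ?O = "odd_qprod (-1) d M"
  have "fps_agree (Suc N) (ell d) (?P * ?O)"
    using ell_agree_qpoch[of d N "2 * M"] assms unfolding M_def qpoch_fps_X_power_double by simp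
  then have "fps_agree (Suc N) (ell d ^ 2) ((?P * ?O) ^ 2)"
    by (rule fps_agree_power)
  also have "(?P * ?O) ^ 2 = ?P * (?P * ?O ^ 2)"
    by (simp add: power2_eq_square ac_simps)
  also have "fps_agree (Suc N) \<dots> (ell (2 * d) * (1 + 2 * theta_tail d (-1)))"
    using assms by (intro fps_agree_mult fps_agree_sym[OF ell_agree_qpoch] theta_tail_agree) (auto simp: M_def)
  finally show "fps_agree (Suc N) ((1 + 2 * theta_tail d (-1)) * ell (2 * d)) (ell d ^ 2)"
    by (subst mult.commute) (rule fps_agree_sym)
qed

lemma phi_mult_ell:
  assumes "d \<ge> 1"
  shows "(1 + 2 * theta_tail d 1) * ell d ^ 2 * ell (4 * d) ^ 2 = ell (2 * d) ^ 5"
proof (rule fps_eq_if_agree)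
  fix N :: nat
  define M where "M = 2 * N + 1"
  let ?P2 = "qpoch (fps_X ^ (2 * d) :: int fps) M" and ?P4 = "qpoch (fps_X ^ (4 * d) :: int fps) M"
  have "fps_agree (Suc N) ((1 + 2 * theta_tail d 1) * ell d ^ 2 * ell (4 * d) ^ 2)
      ((?P2 * odd_qprod 1 d M ^ 2) * (?P2 * odd_qprod (-1) d M) ^ 2 * ?P4 ^ 2)"
  proof (intro fps_agree_mult fps_agree_power)
    show "fps_agree (Suc N) (1 + 2 * theta_tail d 1) (?P2 * odd_qprod 1 d M ^ 2)"
      using assms by (intro fps_agree_sym[OF theta_tail_agree]) (auto simp: M_def)
    show "fps_agree (Suc N) (ell d) (?P2 * odd_qprod (-1) d M)"
      using ell_agree_qpoch[of d N "2 * M"] assms unfolding M_def qpoch_fps_X_power_double by simp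
    show "fps_agree (Suc N) (ell (4 * d)) ?P4"
      using assms by (intro ell_agree_qpoch) (auto simp: M_def)
  qed
  also have "(?P2 * odd_qprod 1 d M ^ 2) * (?P2 * odd_qprod (-1) d M) ^ 2 * ?P4 ^ 2 =
      ?P2 * (?P2 * (?P4 * odd_qprod (-1) (2 * d) M)) ^ 2"
    unfolding odd_qprod_neg_mult_odd_qprod[symmetric] by (simp add: power2_eq_square ac_simps)
  also have "fps_agree (Suc N) \<dots> (ell (2 * d) * (ell (2 * d) * ell (2 * d)) ^ 2)"
  proof -
    have P2: "fps_agree (Suc N) ?P2 (ell (2 * d))"
      using assms by (intro fps_agree_sym[OF ell_agree_qpoch]) (auto simp: M_def)
    have "qpoch (fps_X ^ (2 * d) :: int fps) (2 * M) = ?P4 * odd_qprod (-1) (2 * d) M"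
      using qpoch_fps_X_power_double[of "2 * d" M] by (simp add: mult.assoc)
    then have "fps_agree (Suc N) (?P4 * odd_qprod (-1) (2 * d) M) (ell (2 * d))"
      using ell_agree_qpoch[of "2 * d" N "2 * M"] assms by (auto simp: M_def intro: fps_agree_sym)
    with P2 show ?thesis
      by (intro fps_agree_mult fps_agree_power)
  qed
  also have "ell (2 * d) * (ell (2 * d) * ell (2 * d)) ^ 2 = ell (2 * d) ^ 5"
    by (simp add: power_mult_distrib flip: power_add power_Suc)
  finally show "fps_agree (Suc N) ((1 + 2 * theta_tail d 1) * ell d ^ 2 * ell (4 * d) ^ 2) (ell (2 * d) ^ 5)" .
qed

lemma psi_dil_mult_ell:
  assumes "d \<ge> 1"
  shows "psi_dil d * ell d = ell (2 * d) ^ 2"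
proof (rule fps_eq_if_agree)
  fix N :: nat
  define M where "M = 2 * N + 1"
  let ?P = "qpoch (fps_X ^ d :: int fps) M"
  have "fps_agree (Suc N) (psi_dil d * ell d) ((?P * qpoch_plus d M ^ 2) * ?P)"
    using assms by (intro fps_agree_mult fps_agree_sym[OF psi_dil_agree] ell_agree_qpoch) (auto simp: M_def)
  also have "(?P * qpoch_plus d M ^ 2) * ?P = qpoch (fps_X ^ (2 * d)) M ^ 2"
    unfolding qpoch_mult_qpoch_plus[symmetric] by (simp add: power2_eq_square ac_simps)
  also have "fps_agree (Suc N) \<dots> (ell (2 * d) ^ 2)"
    using assms by (intro fps_agree_power fps_agree_sym[OF ell_agree_qpoch]) (auto simp: M_def)
  finally show "fps_agree (Suc N) (psi_dil d * ell d) (ell (2 * d) ^ 2)" .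
qed

section \<open>Congruences between power series\<close>

definition fps_cong :: "int \<Rightarrow> int fps \<Rightarrow> int fps \<Rightarrow> bool" where
  "fps_cong m f g \<longleftrightarrow> (\<forall>n. [f $ n = g $ n] (mod m))"

lemma fps_cong_refl [simp]: "fps_cong m f f"
  by (simp add: fps_cong_def)

lemma fps_cong_sym: "fps_cong m f g \<Longrightarrow> fps_cong m g f"
  by (simp add: fps_cong_def cong_sym)

lemma fps_cong_trans [trans]: "fps_cong m f g \<Longrightarrow> fps_cong m g h \<Longrightarrow> fps_cong m f h"
  unfolding fps_cong_def by (metis cong_trans)

lemma fps_cong_mult: "fps_cong m f f' \<Longrightarrow> fps_cong m g g' \<Longrightarrow> fps_cong m (f * g) (f' * g')"
  unfolding fps_cong_def fps_mult_nth by (auto intro!: cong_sum cong_mult)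

lemma fps_cong_cancel:
  assumes "fps_cong m (f * h) (g * h)" and "h $ 0 = 1"
  shows "fps_cong m f g"
proof -
  have "h * fps_right_inverse h 1 = 1"
    using assms(2) by (intro fps_right_inverse) simp
  moreover have "fps_cong m (f * h * fps_right_inverse h 1) (g * h * fps_right_inverse h 1)"
    using assms(1) by (rule fps_cong_mult) simp
  ultimately show ?thesis
    by (simp add: mult.assoc)
qed

lemma fps_cong_add_multiple: "fps_cong m (f + fps_const m * g) f"
  by (simp add: fps_cong_def cong_iff_dvd_diff)

lemma qpoch_square_cong_2: "fps_cong 2 (qpoch (fps_X ^ k) M ^ 2) (qpoch (fps_X ^ (2 * k)) M)"
proof (induction M)
  case (Suc M)
  let ?x = "(fps_X ^ k :: int fps) ^ Suc M"
  have "(1 - ?x)^2 = (1 - ?x^2) + fps_const 2 * (?x^2 - ?x)"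
    unfolding numeral_fps_const[symmetric] by (simp add: algebra_simps power2_eq_square)
  moreover have "?x^2 = (fps_X ^ (2 * k)) ^ Suc M"
    by (metis power_mult mult.commute)
  ultimately have "fps_cong 2 ((1 - ?x)^2) (1 - (fps_X ^ (2 * k)) ^ Suc M)"
    using fps_cong_add_multiple[of 2 "1 - ?x^2" "?x^2 - ?x"] by simp
  with Suc.IH show ?case
    unfolding qpoch_Suc power_mult_distrib by (rule fps_cong_mult)
qed simp

lemma ell_square_cong_2:
  assumes "k \<ge> 1"
  shows "fps_cong 2 (ell k ^ 2) (ell (2 * k))"
  unfolding fps_cong_def
proof
  fix n
  have "fps_agree (Suc n) (ell k ^ 2) (qpoch (fps_X ^ k) n ^ 2)"
    using assms by (intro fps_agree_power ell_agree_qpoch) auto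
  then have "(ell k ^ 2) $ n = (qpoch (fps_X ^ k) n ^ 2) $ n"
    unfolding fps_agree_def by simp
  with qpoch_square_cong_2 show "[(ell k ^ 2) $ n = ell (2 * k) $ n] (mod 2)"
    unfolding fps_cong_def ell_nth[of "2 * k"] by simp
qed

text \<open>\<open>\<psi>(q) \<psi>(q^2) = \<ell>\<^sub>2^2 \<ell>\<^sub>4^2 / (\<ell>\<^sub>1 \<ell>\<^sub>2)\<close>, and \<open>\<ell>\<^sub>k^2 \<equiv> \<ell>\<^sub>2\<^sub>k\<close> modulo 2.\<close>
lemma psi_mult_psi_cong_2: "fps_cong 2 (psi_dil 1 * psi_dil 2) (ell 1 * ell 8)"
proof (rule fps_cong_cancel)
  have psi1: "psi_dil 1 * ell 1 = ell 2 ^ 2" and psi2: "psi_dil 2 * ell 2 = ell 4 ^ 2"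
    using psi_dil_mult_ell[of 1] psi_dil_mult_ell[of 2] by simp_all
  have sq1: "fps_cong 2 (ell 1 ^ 2) (ell 2)" and sq4: "fps_cong 2 (ell 4 ^ 2) (ell 8)"
    using ell_square_cong_2[of 1] ell_square_cong_2[of 4] by simp_all
  have "(psi_dil 1 * psi_dil 2) * (ell 1 * ell 2) = (psi_dil 1 * ell 1) * (psi_dil 2 * ell 2)"
    by (simp only: ac_simps)
  also have "\<dots> = ell 2 * (ell 2 * ell 4 ^ 2)"
    unfolding psi1 psi2 by (simp only: power2_eq_square ac_simps)
  also have "fps_cong 2 \<dots> (ell 1 ^ 2 * (ell 2 * ell 8))"
    using fps_cong_mult[OF fps_cong_sym[OF sq1] fps_cong_mult[OF fps_cong_refl sq4]] .
  also have "ell 1 ^ 2 * (ell 2 * ell 8) = (ell 1 * ell 8) * (ell 1 * ell 2)"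
    by (simp only: power2_eq_square ac_simps)
  finally show "fps_cong 2 ((psi_dil 1 * psi_dil 2) * (ell 1 * ell 2)) ((ell 1 * ell 8) * (ell 1 * ell 2))" .
  show "(ell 1 * ell 2) $ 0 = 1"
    by simp
qed

section \<open>The generating function of \<open>g2\<close>\<close>

lemma G2_mult_phi_minus: "G2 * (1 + 2 * theta_tail 1 (-1)) = 1 + 2 * theta_tail 2 1"
proof -
  let ?D = "ell 1 ^ 2 * ell 2 * ell 8 ^ 2" and ?W = "ell 2 ^ 2 * ell 8 ^ 2"
  have W0: "?W $ 0 = 1"
    by (simp add: fps_power_zeroth)
  have "?D $ 0 = 1"
    by (simp add: fps_power_zeroth)
  then have "?D * fps_right_inverse ?D 1 = 1"
    by (intro fps_right_inverse) simp
  moreover have "G2 * ?D = ell 4 ^ 5 * (?D * fps_right_inverse ?D 1)"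
    unfolding G2_def by (simp only: ac_simps)
  ultimately have "G2 * ?D = ell 4 ^ 5"
    by simp
  moreover have "?D = (1 + 2 * theta_tail 1 (-1)) * ?W"
  proof -
    have "ell 1 ^ 2 = (1 + 2 * theta_tail 1 (-1)) * ell 2"
      using phi_minus_mult_ell[of 1] by simp
    then show ?thesis
      by (simp only: power2_eq_square ac_simps)
  qed
  moreover have "(1 + 2 * theta_tail 2 1) * ?W = ell 4 ^ 5"
    using phi_mult_ell[of 2] by (simp only: mult.assoc) simp
  ultimately have "(G2 * (1 + 2 * theta_tail 1 (-1))) * ?W = (1 + 2 * theta_tail 2 1) * ?W"
    by (simp only: mult.assoc)
  moreover have "?W \<noteq> 0"
    using W0 by auto
  ultimately show ?thesis
    by (simp only: mult_cancel_right) simp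
qed

text \<open>Multiply \<open>G2 (1 + 2T) = 1 + 2S\<close> by \<open>1 - 2T + 4T^2\<close>, using \<open>(1 + 2T)(1 - 2T + 4T^2) = 1 + 8T^3\<close>.\<close>
lemma G2_expansion:
  defines "T \<equiv> theta_tail 1 (-1)" and "S \<equiv> theta_tail 2 1"
  shows "G2 = 1 + 2 * S - 2 * T - 4 * (S * T) + 4 * T^2 + 8 * (T^2 * (S - T * G2))"
proof -
  have "G2 - (1 + 2 * S - 2 * T - 4 * (S * T) + 4 * T^2 + 8 * (T^2 * (S - T * G2))) =
      (1 - 2 * T + 4 * T^2) * (G2 * (1 + 2 * T) - (1 + 2 * S))"
    by (simp add: algebra_simps power2_eq_square)
  then show ?thesis
    using G2_mult_phi_minus unfolding T_def S_def by simp
qed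

lemma g2_cong_8:
  "[g2 N = (1::int fps) $ N + 2 * theta_tail 2 1 $ N - 2 * theta_tail 1 (-1) $ N
      - 4 * (theta_tail 2 1 * theta_tail 1 (-1)) $ N + 4 * (theta_tail 1 (-1) ^ 2) $ N] (mod 8)"
  unfolding g2_def cong_iff_dvd_diff by (subst G2_expansion) (simp add: numeral_fps_const)

lemma g2_cong_4:
  "[g2 N = (1::int fps) $ N + 2 * theta_tail 2 1 $ N - 2 * theta_tail 1 (-1) $ N] (mod 4)"
proof -
  have "[g2 N = (1::int fps) $ N + 2 * theta_tail 2 1 $ N - 2 * theta_tail 1 (-1) $ N
      - 4 * (theta_tail 2 1 * theta_tail 1 (-1)) $ N + 4 * (theta_tail 1 (-1) ^ 2) $ N] (mod 4)"
    using g2_cong_8 by (rule cong_dvd_modulus) simp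
  then show ?thesis
    unfolding cong_iff_dvd_diff by presburger
qed

section \<open>Representations by \<open>2a^2 + b^2\<close>\<close>

lemma fps_mult_nth_card:
  fixes f :: "'a \<Rightarrow> nat" and g :: "'b \<Rightarrow> nat"
  assumes "\<And>i. finite {a \<in> A. f a = i}" and "\<And>j. finite {b \<in> B. g b = j}"
  shows "(Abs_fps (\<lambda>i. int (card {a \<in> A. f a = i})) * Abs_fps (\<lambda>j. int (card {b \<in> B. g b = j}))) $ N =
    int (card {(a, b) \<in> A \<times> B. f a + g b = N})"
proof -
  let ?C = "\<lambda>i. {a \<in> A. f a = i} \<times> {b \<in> B. g b = N - i}"
  have "(Abs_fps (\<lambda>i. int (card {a \<in> A. f a = i})) * Abs_fps (\<lambda>j. int (card {b \<in> B. g b = j}))) $ N =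
      int (\<Sum>i\<le>N. card (?C i))"
    by (simp add: fps_mult_nth atLeast0AtMost card_cartesian_product)
  also have "(\<Sum>i\<le>N. card (?C i)) = card (\<Union>i\<le>N. ?C i)"
    using assms by (intro card_UN_disjoint[symmetric]) auto
  also have "(\<Union>i\<le>N. ?C i) = {(a, b) \<in> A \<times> B. f a + g b = N}"
    by auto
  finally show ?thesis .
qed

lemma card_fiber_inj_on:
  assumes "inj_on f A"
  shows "card {a \<in> A. f a = N} = (if \<exists>a \<in> A. f a = N then 1 else 0)"
proof (cases "\<exists>a \<in> A. f a = N")
  case True
  then obtain a where "a \<in> A" "f a = N" ..
  with assms have "{a \<in> A. f a = N} = {a}"
    by (auto dest: inj_onD)
  then show ?thesis
    using True by simp
next
  case False
  then show ?thesis
    by (simp add: card_eq_0_iff)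
qed

lemma psi_dil_eq_card:
  assumes "d \<ge> 1"
  shows "psi_dil d = Abs_fps (\<lambda>N. int (card {m. d * (m * (m + 1) div 2) = N}))"
proof (rule fps_ext)
  fix N
  let ?f = "\<lambda>m::nat. d * (m * (m + 1) div 2)"
  have "inj_on ?f UNIV"
    using strict_mono_imp_inj_on[OF strict_mono_triangle[OF assms]] .
  then have "card {m \<in> UNIV. ?f m = N} = (if \<exists>m \<in> UNIV. ?f m = N then 1 else 0)"
    by (rule card_fiber_inj_on)
  then show "psi_dil d $ N = Abs_fps (\<lambda>N. int (card {m. ?f m = N})) $ N"
    by (auto simp: psi_dil_def)
qed

definition reps_2sq_sq :: "nat \<Rightarrow> (nat \<times> nat) set" where
  "reps_2sq_sq N = {(a, b) \<in> {1..} \<times> {1..}. 2 * a^2 + b^2 = N}"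

lemma theta_tail_2_1_eq_card:
  "theta_tail 2 1 = Abs_fps (\<lambda>N. int (card {a \<in> {1::nat..}. 2 * a^2 = N}))"
proof (rule fps_ext)
  fix N
  have "{a \<in> {1::nat..}. 2 * a^2 = N} = {a \<in> {1::nat..N}. 2 * a^2 = N}"
    using le_power2_nat by (fastforce intro: le_trans)
  then show "theta_tail 2 1 $ N = Abs_fps (\<lambda>N. int (card {a \<in> {1::nat..}. 2 * a^2 = N})) $ N"
    by (simp add: theta_tail_def sum.inter_filter[symmetric])
qed

lemma theta_tail_1_minus_cong_2:
  "fps_cong 2 (theta_tail 1 (-1)) (Abs_fps (\<lambda>N. int (card {b \<in> {1::nat..}. b^2 = N})))"
  unfolding fps_cong_def
proof
  fix N
  have "{b \<in> {1::nat..}. b^2 = N} = {b \<in> {1::nat..N}. b^2 = N}"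
    using le_power2_nat by (fastforce intro: le_trans)
  then have "int (card {b \<in> {1::nat..}. b^2 = N}) = (\<Sum>b\<in>{1..N}. if b^2 = N then 1 else 0)"
    by (simp add: sum.inter_filter[symmetric])
  moreover have "[(\<Sum>b\<in>{1..N}. if b^2 = N then (-1::int) ^ b else 0) = (\<Sum>b\<in>{1..N}. if b^2 = N then 1 else 0)] (mod 2)"
  proof (rule cong_sum)
    fix b :: nat
    have "[(-1::int) ^ b = 1] (mod 2)"
      by (cases "even b") (auto simp: cong_def)
    then show "[(if b^2 = N then (-1::int) ^ b else 0) = (if b^2 = N then 1 else 0)] (mod 2)"
      by simp
  qed
  ultimately show "[theta_tail 1 (-1) $ N = Abs_fps (\<lambda>N. int (card {b \<in> {1::nat..}. b^2 = N})) $ N] (mod 2)"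
    by (simp add: theta_tail_def)
qed

lemma finite_fiber_power2:
  assumes "c \<ge> 1"
  shows "finite {a \<in> {1::nat..}. c * a^2 = i}"
proof (rule finite_subset)
  show "{a \<in> {1::nat..}. c * a^2 = i} \<subseteq> {..i}"
  proof
    fix a assume "a \<in> {a \<in> {1::nat..}. c * a^2 = i}"
    moreover have "a \<le> c * a^2"
      using assms le_power2_nat[of a] by (metis le_trans mult_le_mono1 mult_1)
    ultimately show "a \<in> {..i}"
      by simp
  qed
qed simp

lemma theta_tails_mult_cong_2:
  "[(theta_tail 2 1 * theta_tail 1 (-1)) $ N = int (card (reps_2sq_sq N))] (mod 2)"
proof -
  let ?S = "Abs_fps (\<lambda>i. int (card {a \<in> {1::nat..}. 2 * a^2 = i}))"
  let ?T = "Abs_fps (\<lambda>j. int (card {b \<in> {1::nat..}. b^2 = j}))"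
  have "fps_cong 2 (theta_tail 2 1 * theta_tail 1 (-1)) (?S * ?T)"
    unfolding theta_tail_2_1_eq_card by (intro fps_cong_mult fps_cong_refl theta_tail_1_minus_cong_2)
  then have "[(theta_tail 2 1 * theta_tail 1 (-1)) $ N = (?S * ?T) $ N] (mod 2)"
    unfolding fps_cong_def ..
  also have "(?S * ?T) $ N = int (card (reps_2sq_sq N))"
    unfolding reps_2sq_sq_def
  proof (rule fps_mult_nth_card)
    show "finite {a \<in> {1::nat..}. 2 * a^2 = i}" "finite {b \<in> {1::nat..}. b^2 = j}" for i j
      using finite_fiber_power2[of 2 i] finite_fiber_power2[of 1 j] by simp_all
  qed
  finally show ?thesis .
qed

lemma odd_square_eq: "(2 * j + 1)^2 = 8 * (j * (j + 1) div 2) + (1::nat)"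
proof -
  have "2 * (j * (j + 1) div 2) = j * (j + 1)"
    by simp
  moreover have "(2 * j + 1)^2 = 4 * (j * (j + 1)) + 1"
    by (simp add: power2_eq_square algebra_simps)
  ultimately show ?thesis
    by linarith
qed

lemma reps_2sq_sq_odd:
  assumes "(a, b) \<in> reps_2sq_sq (8 * m + 3)"
  shows "odd a \<and> odd b"
proof -
  have eq: "2 * a^2 + b^2 = 8 * m + 3"
    using assms by (simp add: reps_2sq_sq_def)
  then have "odd (b^2)"
    by presburger
  then have "odd b"
    by simp
  then obtain j where "b = 2 * j + 1"
    using oddE by blast
  then have "2 * a^2 + 8 * (j * (j + 1) div 2) + 1 = 8 * m + 3"
    using eq odd_square_eq[of j] by simp
  then have "odd (a^2)"
    by presburger
  with \<open>odd b\<close> show ?thesis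
    by simp
qed

lemma card_triangle_pairs_eq_card_reps:
  "card {(j, k). j * (j + 1) div 2 + 2 * (k * (k + 1) div 2) = m} = card (reps_2sq_sq (8 * m + 3))"
proof -
  let ?A = "{(j, k). j * (j + 1) div 2 + 2 * (k * (k + 1) div 2) = m}"
  let ?f = "\<lambda>(j, k). (2 * k + 1, 2 * j + 1)" and ?g = "\<lambda>(a, b). ((b - 1) div 2, (a - 1) div 2)"
  have rep: "2 * (2 * k + 1)^2 + (2 * j + 1)^2 = 8 * (j * (j + 1) div 2 + 2 * (k * (k + 1) div 2)) + 3"
    for j k :: nat
  proof -
    have "2 * (8 * y + 1) + (8 * x + 1) = 8 * (x + 2 * y) + (3::nat)" for x y
      by simp
    then show ?thesis
      by (simp only: odd_square_eq)
  qed
  have "bij_betw ?f ?A (reps_2sq_sq (8 * m + 3))"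
  proof (rule bij_betw_byWitness[where f' = ?g])
    show "\<forall>x \<in> ?A. ?g (?f x) = x"
      by auto
    show "\<forall>y \<in> reps_2sq_sq (8 * m + 3). ?f (?g y) = y"
      using reps_2sq_sq_odd by (auto elim!: oddE)
    show "?f ` ?A \<subseteq> reps_2sq_sq (8 * m + 3)"
      using rep by (auto simp: reps_2sq_sq_def)
    show "?g ` reps_2sq_sq (8 * m + 3) \<subseteq> ?A"
    proof
      fix y assume "y \<in> ?g ` reps_2sq_sq (8 * m + 3)"
      then obtain a b where ab: "(a, b) \<in> reps_2sq_sq (8 * m + 3)" and y: "y = ?g (a, b)"
        by auto
      then obtain j k where "a = 2 * k + 1" "b = 2 * j + 1"
        using reps_2sq_sq_odd by (meson oddE)
      with ab y rep[of k j] show "y \<in> ?A"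
        by (simp add: reps_2sq_sq_def)
    qed
  qed
  then show ?thesis
    by (rule bij_betw_same_card)
qed

lemma psi_mult_psi_nth: "(psi_dil 1 * psi_dil 2) $ m = int (card (reps_2sq_sq (8 * m + 3)))"
proof -
  have fin: "finite {j. c * (j * (j + 1) div 2) = i}" if "c \<ge> 1" for c i :: nat
  proof (rule finite_subset)
    show "{j. c * (j * (j + 1) div 2) = i} \<subseteq> {..i}"
      using that le_triangle by (auto intro: le_trans order_trans[OF _ mult_le_mono1[of 1 c]])
  qed simp
  have "psi_dil 1 = Abs_fps (\<lambda>N. int (card {j \<in> UNIV. 1 * (j * (j + 1) div 2) = N}))"
    by (simp add: psi_dil_eq_card)
  moreover have "psi_dil 2 = Abs_fps (\<lambda>N. int (card {k \<in> UNIV. 2 * (k * (k + 1) div 2) = N}))"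
    by (simp add: psi_dil_eq_card)
  ultimately have "(psi_dil 1 * psi_dil 2) $ m =
      int (card {(j, k) \<in> UNIV \<times> UNIV. 1 * (j * (j + 1) div 2) + 2 * (k * (k + 1) div 2) = m})"
    using fin[of 1] fin[of 2] by (simp only:) (rule fps_mult_nth_card, simp_all)
  then show ?thesis
    using card_triangle_pairs_eq_card_reps[of m] by simp
qed

section \<open>Coefficients of \<open>g2\<close> at \<open>2M\<close> and at \<open>4M + 3\<close>\<close>

lemma theta_tail_nth_eq_0: "\<not> (\<exists>b. d * b^2 = N) \<Longrightarrow> theta_tail d c $ N = 0"
  by (simp add: theta_tail_def)

lemma power2_mod_4: "(b::nat)^2 mod 4 = 0 \<or> b^2 mod 4 = 1"
proof (cases "even b")
  case True
  then show ?thesis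
    by (auto simp: power2_eq_square elim!: evenE)
next
  case False
  then obtain j where "b = 2 * j + 1"
    using oddE by blast
  then have "b^2 = 8 * (j * (j + 1) div 2) + 1"
    by (simp only: odd_square_eq)
  moreover have "(8 * t + 1) mod 4 = (1::nat)" for t
    by presburger
  ultimately show ?thesis
    by simp
qed

lemma not_square_if_mod_4: "N mod 4 = 2 \<or> N mod 4 = 3 \<Longrightarrow> b^2 \<noteq> (N::nat)"
  using power2_mod_4[of b] by auto

lemma g2_double_odd_cong:
  assumes "odd M"
  shows "[g2 (2 * M) = 2 * (if \<exists>x. x^2 = M then 1 else 0)] (mod 4)"
proof -
  have "2 * M mod 4 = 2"
    using assms by presburger
  then have "theta_tail 1 (-1) $ (2 * M) = 0"
    using not_square_if_mod_4 by (intro theta_tail_nth_eq_0) auto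
  moreover have "theta_tail 2 1 $ (2 * M) = (if \<exists>x. x^2 = M then 1 else 0)"
  proof -
    have "{a \<in> {1::nat..}. 2 * a^2 = 2 * M} = {a \<in> UNIV. a^2 = M}"
      using assms by (auto simp: Suc_le_eq intro!: Nat.gr0I)
    moreover have "card {a \<in> UNIV. a^2 = M} = (if \<exists>a \<in> UNIV. a^2 = M then 1 else 0)"
      by (rule card_fiber_inj_on) (auto intro: inj_onI)
    ultimately show ?thesis
      unfolding theta_tail_2_1_eq_card by simp
  qed
  moreover have "(1::int fps) $ (2 * M) = 0"
    using assms by (auto simp: fps_one_nth elim: oddE)
  ultimately show ?thesis
    using g2_cong_4[of "2 * M"] by simp
qed

lemma theta_tail_square_nth_eq_0:
  assumes "N mod 4 = 3"
  shows "(theta_tail 1 c ^ 2) $ N = 0"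
  unfolding power2_eq_square fps_mult_nth
proof (rule sum.neutral, rule ballI)
  fix i assume "i \<in> {0..N}"
  show "theta_tail 1 c $ i * theta_tail 1 c $ (N - i) = 0"
  proof (cases "(\<exists>a. a^2 = i) \<and> (\<exists>b. b^2 = N - i)")
    case True
    then obtain a b where "a^2 = i" "b^2 = N - i"
      by blast
    with \<open>i \<in> {0..N}\<close> have "a^2 + b^2 = N"
      by simp
    with assms power2_mod_4[of a] power2_mod_4[of b] show ?thesis
      by presburger
  qed (auto simp: theta_tail_nth_eq_0)
qed

lemma cong_mult_left_mult_modulus:
  fixes a b c m :: int
  assumes "[a = b] (mod m)"
  shows "[c * a = c * b] (mod c * m)"
proof -
  obtain k where "a - b = m * k"
    using assms unfolding cong_iff_dvd_diff by (auto elim: dvdE)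
  then have "c * a - c * b = (c * m) * k"
    by (metis mult.assoc right_diff_distrib)
  then show ?thesis
    unfolding cong_iff_dvd_diff by simp
qed

lemma g2_cong_card_reps:
  assumes "N mod 4 = 3"
  shows "[g2 N = 4 * int (card (reps_2sq_sq N))] (mod 8)"
proof -
  let ?ST = "theta_tail 2 1 * theta_tail 1 (-1)"
  have "theta_tail 1 (-1) $ N = 0"
    using assms not_square_if_mod_4 by (intro theta_tail_nth_eq_0) auto
  moreover have "theta_tail 2 1 $ N = 0"
  proof (rule theta_tail_nth_eq_0)
    have "2 * y \<noteq> N" for y
      using assms by presburger
    then show "\<nexists>b. 2 * b^2 = N"
      by blast
  qed
  moreover have "(1::int fps) $ N = 0"
    using assms by (auto simp: fps_one_nth)
  ultimately have "[g2 N = - 4 * ?ST $ N] (mod 8)"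
    using g2_cong_8[of N] theta_tail_square_nth_eq_0[OF assms, of "-1"] by simp
  also have "[- 4 * ?ST $ N = 4 * ?ST $ N] (mod 8)"
    by (simp add: cong_iff_dvd_diff)
  also have "[4 * ?ST $ N = 4 * int (card (reps_2sq_sq N))] (mod 8)"
    using cong_mult_left_mult_modulus[OF theta_tails_mult_cong_2, of 4] by simp
  finally show ?thesis .
qed

lemma ell_1_mult_ell_8_cong_card_reps: "[(ell 1 * ell 8) $ m = int (card (reps_2sq_sq (8 * m + 3)))] (mod 2)"
  using psi_mult_psi_cong_2 psi_mult_psi_nth unfolding fps_cong_def by (metis cong_sym)

lemma psi_nth_eq: "psi $ n = (if \<exists>x. x^2 = 8 * n + 1 then 1 else 0)"
proof -
  have "(\<exists>m. n = m * (m + 1) div 2) \<longleftrightarrow> (\<exists>x. x^2 = 8 * n + 1)"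
  proof
    assume "\<exists>m. n = m * (m + 1) div 2"
    then show "\<exists>x. x^2 = 8 * n + 1"
      using odd_square_eq by metis
  next
    assume "\<exists>x. x^2 = 8 * n + 1"
    then obtain x where x: "x^2 = 8 * n + 1" ..
    then have "odd (x^2)"
      by simp
    then have "odd x"
      by simp
    then obtain j where "x = 2 * j + 1"
      using oddE by blast
    with x have "n = j * (j + 1) div 2"
      using odd_square_eq[of j] by simp
    then show "\<exists>m. n = m * (m + 1) div 2" ..
  qed
  then show ?thesis
    by (simp add: psi_def)
qed

section \<open>Multiplication by prime powers\<close>

text \<open>If \<open>p\<close> divided \<open>2a^2 + b^2\<close> but not \<open>a\<close>, then \<open>(2 b a\<^sup>-\<^sup>1)^2 \<equiv> -8\<close> modulo \<open>p\<close>.\<close>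
lemma prime_dvd_2sq_plus_sq:
  fixes p a b :: nat
  assumes p: "prime p" and nonres: "Legendre (-8) (int p) = -1" and dvd: "p dvd 2 * a^2 + b^2"
  shows "p dvd a \<and> p dvd b"
proof -
  have "p dvd a"
  proof (rule ccontr)
    assume "\<not> p dvd a"
    with p have "coprime p a"
      by (rule prime_imp_coprime)
    then have "gcd (int a) (int p) = 1"
      by (simp add: coprime_commute coprime_iff_gcd_eq_1[symmetric])
    moreover obtain x where "[int a * x = gcd (int a) (int p)] (mod int p)"
      using cong_solve_int by blast
    ultimately have inverse: "int p dvd int a * x - 1"
      by (simp add: cong_iff_dvd_diff)
    have "int p dvd int (2 * a^2 + b^2)"
      using dvd by (simp only: int_dvd_int_iff)
    then have "int p dvd 2 * int a^2 + int b^2"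
      by simp
    then have "int p dvd 4 * x^2 * (2 * int a^2 + int b^2) - 8 * (int a * x - 1) * (int a * x + 1)"
      by (rule dvd_diff[OF dvd_mult dvd_mult2[OF dvd_mult[OF inverse]]])
    moreover have "4 * x^2 * (2 * int a^2 + int b^2) - 8 * (int a * x - 1) * (int a * x + 1) = (2 * int b * x)^2 + 8"
      by (simp add: algebra_simps power2_eq_square)
    ultimately have "[(2 * int b * x)^2 = -8] (mod int p)"
      by (simp add: cong_iff_dvd_diff)
    then have "QuadRes (int p) (-8)"
      unfolding QuadRes_def by blast
    with nonres show False
      by (simp add: Legendre_def split: if_splits)
  qed
  then have "p dvd 2 * a^2"
    by (simp add: power2_eq_square)
  with dvd have "p dvd b^2"
    by (simp add: dvd_add_right_iff)
  with \<open>p dvd a\<close> p show ?thesis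
    using prime_dvd_power by blast
qed

lemma card_reps_2sq_sq_mult_prime_square:
  assumes p: "prime p" and nonres: "Legendre (-8) (int p) = -1"
  shows "card (reps_2sq_sq (p^2 * N)) = card (reps_2sq_sq N)"
proof -
  have "p > 0"
    using p prime_gt_0_nat by blast
  have "bij_betw (\<lambda>(a, b). (p * a, p * b)) (reps_2sq_sq N) (reps_2sq_sq (p^2 * N))"
  proof (rule bij_betw_imageI)
    show "inj_on (\<lambda>(a, b). (p * a, p * b)) (reps_2sq_sq N)"
      using \<open>p > 0\<close> by (auto intro: inj_onI)
    show "(\<lambda>(a, b). (p * a, p * b)) ` reps_2sq_sq N = reps_2sq_sq (p^2 * N)"
    proof (intro equalityI subsetI)
      fix y assume "y \<in> (\<lambda>(a, b). (p * a, p * b)) ` reps_2sq_sq N"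
      then show "y \<in> reps_2sq_sq (p^2 * N)"
        using \<open>p > 0\<close> by (auto simp: reps_2sq_sq_def power_mult_distrib algebra_simps Suc_le_eq)
    next
      fix y assume y: "y \<in> reps_2sq_sq (p^2 * N)"
      then obtain a b where ab: "y = (a, b)" "a \<ge> 1" "b \<ge> 1" "2 * a^2 + b^2 = p^2 * N"
        by (auto simp: reps_2sq_sq_def)
      then have "p dvd a \<and> p dvd b"
        using p nonres by (intro prime_dvd_2sq_plus_sq) simp_all
      then obtain a' b' where "a = p * a'" "b = p * b'"
        by (auto elim!: dvdE)
      with ab have "p^2 * (2 * a'^2 + b'^2) = p^2 * N"
        by (simp add: power_mult_distrib algebra_simps)
      with \<open>p > 0\<close> have "2 * a'^2 + b'^2 = N"
        by simp
      moreover have "a' \<ge> 1" "b' \<ge> 1"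
        using ab \<open>a = p * a'\<close> \<open>b = p * b'\<close> by (auto simp: Suc_le_eq)
      ultimately have "(a', b') \<in> reps_2sq_sq N"
        by (simp add: reps_2sq_sq_def)
      then show "y \<in> (\<lambda>(a, b). (p * a, p * b)) ` reps_2sq_sq N"
        using ab \<open>a = p * a'\<close> \<open>b = p * b'\<close> by force
    qed
  qed
  then show ?thesis
    by (metis bij_betw_same_card)
qed

lemma card_reps_2sq_sq_mult_prime_power:
  assumes "prime p" and "Legendre (-8) (int p) = -1"
  shows "card (reps_2sq_sq (p ^ (2 * k) * N)) = card (reps_2sq_sq N)"
proof (induction k)
  case (Suc k)
  have "p ^ (2 * Suc k) * N = p^2 * (p ^ (2 * k) * N)"
    by (simp only: mult_Suc_right power_add mult.assoc)
  then show ?case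
    by (simp only: card_reps_2sq_sq_mult_prime_square[OF assms] Suc.IH)
qed simp

lemma reps_2sq_sq_mult_prime_eq_empty:
  assumes p: "prime p" and nonres: "Legendre (-8) (int p) = -1" and "\<not> p dvd u"
  shows "reps_2sq_sq (p * u) = {}"
proof (rule ccontr)
  assume "reps_2sq_sq (p * u) \<noteq> {}"
  then obtain a b where ab: "2 * a^2 + b^2 = p * u"
    by (auto simp: reps_2sq_sq_def)
  then have "p dvd a \<and> p dvd b"
    using p nonres by (intro prime_dvd_2sq_plus_sq) simp_all
  then obtain a' b' where "a = p * a'" "b = p * b'"
    by (auto elim!: dvdE)
  with ab have "p * (p * (2 * a'^2 + b'^2)) = p * u"
    by (simp add: algebra_simps power2_eq_square)
  then have "u = p * (2 * a'^2 + b'^2)"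
    using p prime_gt_0_nat by simp
  with \<open>\<not> p dvd u\<close> show False
    by simp
qed

lemma exists_square_mult_prime_power_iff:
  fixes p :: nat
  assumes "prime p"
  shows "(\<exists>x. x^2 = p ^ (2 * k) * N) \<longleftrightarrow> (\<exists>x. x^2 = N)"
proof
  assume "\<exists>x. x^2 = p ^ (2 * k) * N"
  then obtain x where x: "x^2 = (p ^ k)^2 * N"
    by (auto simp: power_mult[symmetric] mult.commute)
  then have "p ^ k dvd x"
    by (metis dvd_triv_left pow_divides_pow_iff zero_less_numeral)
  then obtain y where "x = p ^ k * y"
    by (auto elim!: dvdE)
  with x have "(p ^ k)^2 * y^2 = (p ^ k)^2 * N"
    by (simp add: power_mult_distrib)
  then have "y^2 = N"
    using assms prime_gt_0_nat by simp
  then show "\<exists>x. x^2 = N" ..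
next
  assume "\<exists>x. x^2 = N"
  then obtain x where "x^2 = N" ..
  then have "(p ^ k * x)^2 = p ^ (2 * k) * N"
    by (simp add: power_mult_distrib power_mult[symmetric] mult.commute)
  then show "\<exists>x. x^2 = p ^ (2 * k) * N" ..
qed

lemma not_square_mult_odd_prime_power:
  fixes p :: nat
  assumes p: "prime p" and "\<not> p dvd u"
  shows "x^2 \<noteq> p ^ (2 * k + 1) * u"
proof
  assume eq: "x^2 = p ^ (2 * k + 1) * u"
  have "u \<noteq> 0"
  proof
    assume "u = 0"
    with assms(2) show False
      by simp
  qed
  have "x \<noteq> 0"
  proof
    assume "x = 0"
    with eq have "p ^ (2 * k + 1) * u = 0"
      by simp
    with p \<open>u \<noteq> 0\<close> show False
      by simp
  qed
  have "multiplicity p (x^2) = 2 * multiplicity p x"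
    using p \<open>x \<noteq> 0\<close> by (simp add: prime_elem_multiplicity_power_distrib)
  moreover have "multiplicity p (p ^ (2 * k + 1) * u) = 2 * k + 1"
    using p \<open>u \<noteq> 0\<close> assms(2)
    by (simp add: prime_elem_multiplicity_mult_distrib not_dvd_imp_multiplicity_0 prime_gt_0_nat)
  ultimately have "2 * multiplicity p x = 2 * k + 1"
    using eq by simp
  then show False
    by presburger
qed

lemma odd_power_double_mod_8: "odd (p::nat) \<Longrightarrow> p ^ (2 * k) mod 8 = 1"
  using square_mod_8_eq_1_iff[of "p ^ k"] by (simp add: cong_def power_mult mult.commute[of 2])

lemma mod_4_eq_3_if_mod_8_eq_1: "P mod 8 = 1 \<Longrightarrow> (8 * m + 3 * P) mod 4 = (3::nat)"
  by presburger

lemma prime_not_dvd_shifted: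
  fixes p j :: nat
  assumes "prime p" and "odd p" and "1 \<le> j" and "j \<le> p - 1"
  shows "\<not> p dvd 8 * p * n + 8 * j + c * p"
proof
  assume "p dvd 8 * p * n + 8 * j + c * p"
  then have "p dvd 8 * j + p * (8 * n + c)"
    by (simp add: algebra_simps)
  then have "p dvd 2 ^ 3 * j"
    by (simp add: dvd_add_left_iff)
  then have "p dvd 2 \<or> p dvd j"
    using assms(1) prime_dvd_mult_iff prime_dvd_power by blast
  moreover have "\<not> p dvd 2"
    using assms(2) primes_dvd_imp_eq[OF assms(1) two_is_prime_nat] by auto
  moreover have "\<not> p dvd j"
    using assms(3,4) by (auto dest: dvd_imp_le)
  ultimately show False
    by blast
qed

lemma g2_cong_psi:
  fixes p :: nat
  assumes "prime p" and "odd p"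
  shows "[g2 (16 * p ^ (2 * \<alpha>) * n + 2 * p ^ (2 * \<alpha>)) = 2 * psi $ n] (mod 4)"
proof -
  define M where "M = p ^ (2 * \<alpha>) * (8 * n + 1)"
  have "16 * p ^ (2 * \<alpha>) * n + 2 * p ^ (2 * \<alpha>) = 2 * M"
    by (simp add: M_def algebra_simps)
  moreover have "[g2 (2 * M) = 2 * (if \<exists>x. x^2 = M then 1 else 0)] (mod 4)"
    using assms(2) by (intro g2_double_odd_cong) (simp add: M_def)
  moreover have "(\<exists>x. x^2 = M) \<longleftrightarrow> (\<exists>x. x^2 = 8 * n + 1)"
    unfolding M_def by (rule exists_square_mult_prime_power_iff[OF assms(1)])
  ultimately show ?thesis
    by (simp add: psi_nth_eq)
qed

lemma g2_cong_0_mod_4: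
  fixes p :: nat
  assumes "prime p" and "odd p" and "1 \<le> j" and "j \<le> p - 1"
  shows "[g2 (16 * p ^ (2 * \<alpha> + 2) * n + 16 * p ^ (2 * \<alpha> + 1) * j + 2 * p ^ (2 * \<alpha> + 2)) = 0] (mod 4)"
proof -
  define M where "M = p ^ (2 * \<alpha> + 1) * (8 * p * n + 8 * j + p)"
  have "16 * p ^ (2 * \<alpha> + 2) * n + 16 * p ^ (2 * \<alpha> + 1) * j + 2 * p ^ (2 * \<alpha> + 2) = 2 * M"
    by (simp add: M_def algebra_simps)
  moreover have "[g2 (2 * M) = 2 * (if \<exists>x. x^2 = M then 1 else 0)] (mod 4)"
    using assms(2) by (intro g2_double_odd_cong) (simp add: M_def)
  moreover have "x^2 \<noteq> M" for x
    using not_square_mult_odd_prime_power[OF assms(1) prime_not_dvd_shifted[OF assms, of n 1]]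
    by (simp add: M_def)
  ultimately show ?thesis
    by simp
qed

lemma g2_cong_ell_1_mult_ell_8:
  fixes p :: nat
  assumes "prime p" and "odd p" and "Legendre (-8) (int p) = -1"
  shows "[g2 (8 * p ^ (2 * \<alpha>) * n + 3 * p ^ (2 * \<alpha>)) = 4 * (ell 1 * ell 8) $ n] (mod 8)"
proof -
  let ?N = "8 * p ^ (2 * \<alpha>) * n + 3 * p ^ (2 * \<alpha>)"
  have "?N = 8 * (p ^ (2 * \<alpha>) * n) + 3 * p ^ (2 * \<alpha>)"
    by simp
  then have "?N mod 4 = 3"
    using mod_4_eq_3_if_mod_8_eq_1[OF odd_power_double_mod_8[OF assms(2)]] by presburger
  then have "[g2 ?N = 4 * int (card (reps_2sq_sq ?N))] (mod 8)"
    by (rule g2_cong_card_reps)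
  also have "card (reps_2sq_sq ?N) = card (reps_2sq_sq (8 * n + 3))"
  proof -
    have "?N = p ^ (2 * \<alpha>) * (8 * n + 3)"
      by (simp add: algebra_simps)
    then show ?thesis
      by (simp only: card_reps_2sq_sq_mult_prime_power[OF assms(1,3)])
  qed
  also have "[4 * int (card (reps_2sq_sq (8 * n + 3))) = 4 * (ell 1 * ell 8) $ n] (mod 8)"
    using cong_mult_left_mult_modulus[OF cong_sym[OF ell_1_mult_ell_8_cong_card_reps[of n]], of 4] by simp
  finally show ?thesis .
qed

lemma g2_cong_0_mod_8:
  fixes p :: nat
  assumes "prime p" and "odd p" and "Legendre (-8) (int p) = -1" and "1 \<le> j" and "j \<le> p - 1"
  shows "[g2 (8 * p ^ (2 * \<alpha> + 2) * n + 8 * p ^ (2 * \<alpha> + 1) * j + 3 * p ^ (2 * \<alpha> + 2)) = 0] (mod 8)"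
proof -
  let ?N = "8 * p ^ (2 * \<alpha> + 2) * n + 8 * p ^ (2 * \<alpha> + 1) * j + 3 * p ^ (2 * \<alpha> + 2)"
  have "?N = 8 * (p ^ (2 * \<alpha> + 2) * n + p ^ (2 * \<alpha> + 1) * j) + 3 * p ^ (2 * (\<alpha> + 1))"
    by (simp add: algebra_simps)
  then have "?N mod 4 = 3"
    using mod_4_eq_3_if_mod_8_eq_1[OF odd_power_double_mod_8[OF assms(2)]] by presburger
  then have "[g2 ?N = 4 * int (card (reps_2sq_sq ?N))] (mod 8)"
    by (rule g2_cong_card_reps)
  moreover have "card (reps_2sq_sq ?N) = 0"
  proof -
    have "?N = p ^ (2 * \<alpha>) * (p * (8 * p * n + 8 * j + 3 * p))"
      by (simp add: algebra_simps)
    then have "card (reps_2sq_sq ?N) = card (reps_2sq_sq (p * (8 * p * n + 8 * j + 3 * p)))"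
      by (simp only: card_reps_2sq_sq_mult_prime_power[OF assms(1,3)])
    also have "reps_2sq_sq (p * (8 * p * n + 8 * j + 3 * p)) = {}"
      by (rule reps_2sq_sq_mult_prime_eq_empty[OF assms(1,3) prime_not_dvd_shifted[OF assms(1,2,4,5)]])
    finally show ?thesis
      by simp
  qed
  ultimately show ?thesis
    by simp
qed

theorem theorem2:
  fixes \<alpha> :: nat
  shows
   "(\<forall>p::nat. prime p \<and> p \<ge> 3 \<longrightarrow>
       (\<forall>n. [g2 (16 * p ^ (2 * \<alpha>) * n + 2 * p ^ (2 * \<alpha>)) = 2 * fps_nth psi n] (mod 4)) \<and>
       (\<forall>j n. 1 \<le> j \<and> j \<le> p - 1 \<longrightarrow>
          [g2 (16 * p ^ (2 * \<alpha> + 2) * n + 16 * p ^ (2 * \<alpha> + 1) * j + 2 * p ^ (2 * \<alpha> + 2)) = 0] (mod 4)))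
    \<and>
    (\<forall>p::nat. prime p \<and> p \<ge> 5 \<and> Legendre (-8) (int p) = -1 \<longrightarrow>
       (\<forall>n. [g2 (8 * p ^ (2 * \<alpha>) * n + 3 * p ^ (2 * \<alpha>)) = 4 * fps_nth (ell 1 * ell 8) n] (mod 8)) \<and>
       (\<forall>j n. 1 \<le> j \<and> j \<le> p - 1 \<longrightarrow>
          [g2 (8 * p ^ (2 * \<alpha> + 2) * n + 8 * p ^ (2 * \<alpha> + 1) * j + 3 * p ^ (2 * \<alpha> + 2)) = 0] (mod 8)))"
  by (intro conjI allI impI; elim conjE;
      intro g2_cong_psi g2_cong_0_mod_4 g2_cong_ell_1_mult_ell_8 g2_cong_0_mod_8;
      simp add: prime_odd_nat)

end
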